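(* Let $X$ be a Banach space with the Approximation Property, and assume that $\ell_\infty$ embeds isomorphically into $\mathcal{L}(X)$. Then $\ell_1$ embeds isomorphically as a complemented subspace of $\mathcal{N}(X)$.
   Context: $\mathcal{L}(X)$ is the space of bounded linear operators on $X$ with the operator norm. $\mathcal{N}(X)$ is the space of nuclear operators on $X$: the operators $T=\sum_{n=1}^\infty x_n^*\otimes y_n$ with $x_n^*\in X^*$, $y_n\in X$, $\sum_n\|x_n^*\|\|y_n\|<\infty$ (where $(x^*\otimes y)(x)=x^*(x)y$), equipped with the nuclear norm $\nu(T)=\inf\sum_n\|x_n^*\|\|y_n\|$, the infimum over all such representations of $T$. *)

theory Defs
  imports "HOL-Analysis.Analysis"
begin

(* L(X) is the type of bounded linear operators 'a =>L 'a (blinfun) with the operator norm;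
  X* is 'a =>L real. The space l_infinity is the type nat =>C real
  of bounded (continuous) real sequences with the sup norm. *)

definition finite_rank :: "('a::real_normed_vector \<Rightarrow>\<^sub>L 'b::real_normed_vector) \<Rightarrow> bool" where
  "finite_rank T \<longleftrightarrow> (\<exists>B. finite B \<and> range (blinfun_apply T) \<subseteq> span B)"

definition approximation_property :: "'a::banach itself \<Rightarrow> bool" where
  "approximation_property _ \<longleftrightarrow>
     (\<forall>K::'a set. \<forall>\<epsilon>>0. compact K \<longrightarrow>
        (\<exists>T::'a \<Rightarrow>\<^sub>L 'a. finite_rank T \<and> (\<forall>x\<in>K. norm (T x - x) \<le> \<epsilon>)))"

definition iso_embedding :: "('a::real_normed_vector \<Rightarrow> 'b::real_normed_vector) \<Rightarrow> bool" where
  "iso_embedding T \<longleftrightarrow> bounded_linear T \<and> (\<exists>c>0. \<forall>x. c * norm x \<le> norm (T x))"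

definition nuclear_rep :: "('a::banach \<Rightarrow>\<^sub>L 'a) \<Rightarrow> (nat \<Rightarrow> ('a \<Rightarrow>\<^sub>L real)) \<Rightarrow> (nat \<Rightarrow> 'a) \<Rightarrow> bool" where
  "nuclear_rep T xs ys \<longleftrightarrow> summable (\<lambda>n. norm (xs n) * norm (ys n)) \<and>
     (\<forall>x. blinfun_apply T x = (\<Sum>n. blinfun_apply (xs n) x *\<^sub>R ys n))"

definition nuclear_ops :: "('a::banach \<Rightarrow>\<^sub>L 'a) set" where
  "nuclear_ops = {T. \<exists>xs ys. nuclear_rep T xs ys}"

definition nuclear_norm :: "('a::banach \<Rightarrow>\<^sub>L 'a) \<Rightarrow> real" where
  "nuclear_norm T = Inf {(\<Sum>n. norm (xs n) * norm (ys n)) | xs ys. nuclear_rep T xs ys}"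

definition ell1 :: "(nat \<Rightarrow> real) set" where
  "ell1 = {f. summable (\<lambda>n. \<bar>f n\<bar>)}"

definition ell1_norm :: "(nat \<Rightarrow> real) \<Rightarrow> real" where
  "ell1_norm f = (\<Sum>n. \<bar>f n\<bar>)"

definition linear_on_set :: "'a::real_vector set \<Rightarrow> ('a \<Rightarrow> 'b::real_vector) \<Rightarrow> bool" where
  "linear_on_set S f \<longleftrightarrow> (\<forall>x\<in>S. \<forall>y\<in>S. \<forall>a b. f (a *\<^sub>R x + b *\<^sub>R y) = a *\<^sub>R f x + b *\<^sub>R f y)"

definition ell1_complemented_in_nuclear :: "'a::banach itself \<Rightarrow> bool" where
  "ell1_complemented_in_nuclear _ \<longleftrightarrow>
    (\<exists>(J :: (nat \<Rightarrow> real) \<Rightarrow> ('a \<Rightarrow>\<^sub>L 'a)) (P :: ('a \<Rightarrow>\<^sub>L 'a) \<Rightarrow> ('a \<Rightarrow>\<^sub>L 'a)) c C D.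
       J ` ell1 \<subseteq> nuclear_ops \<and>
       (\<forall>f\<in>ell1. \<forall>g\<in>ell1. \<forall>a b. J (\<lambda>n. a * f n + b * g n) = a *\<^sub>R J f + b *\<^sub>R J g) \<and> 0 < c \<and>
       (\<forall>f\<in>ell1. c * ell1_norm f \<le> nuclear_norm (J f) \<and> nuclear_norm (J f) \<le> C * ell1_norm f) \<and>
       linear_on_set nuclear_ops P \<and>
       (\<forall>T\<in>nuclear_ops. P (P T) = P T \<and> nuclear_norm (P T) \<le> D * nuclear_norm T) \<and>
       P ` nuclear_ops = J ` ell1)"

end

(* Let U n be the image of the n-th unit vector of l_infinity under the embedding. Then
   norm (U n) >= c > 0, while all sign sums  sum (+-U n)  are bounded by some M. Choose norming pairs
   a n, b n with a n (U n (b n)) > c/2. Each column of the matrix a n (U j (b n)) is absolutely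
   summable with sum at most M, so a gliding hump subsequence makes the matrix diagonally dominant.
   The rank one operators a i (x) b i then span a copy of l_1 in N(X). Conversely,
   T |-> (trace (U j T))_j maps N(X) into l_1 with norm at most M, the trace being well defined on
   N(X) because X has the approximation property. On the copy of l_1 this map is D (I + E) with D
   the diagonal and column sums of E at most 1/4, so composing it with the Neumann series for
   (I + E)^-1 yields a bounded projection onto the copy. *)

theory Submission
  imports Defs "HOL-Library.Diagonal_Subsequence"
begin

section \<open>Norming functionals\<close>

lemma subspace_Union_chain:
  assumes "C \<noteq> {}" "\<And>G. G \<in> C \<Longrightarrow> subspace G" "\<And>G H. G \<in> C \<Longrightarrow> H \<in> C \<Longrightarrow> G \<subseteq> H \<or> H \<subseteq> G"
  shows "subspace (\<Union>C)"
  unfolding subspace_def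
proof (intro conjI ballI allI)
  show "0 \<in> \<Union>C" using assms(1,2) subspace_0 by blast
next
  fix x z assume "x \<in> \<Union>C" "z \<in> \<Union>C"
  then obtain G H where "G \<in> C" "H \<in> C" "x \<in> G" "z \<in> H" by blast
  then show "x + z \<in> \<Union>C" using assms(2) assms(3)[of G H] subspace_add by blast
next
  fix c x assume "x \<in> \<Union>C"
  then show "c *\<^sub>R x \<in> \<Union>C" using assms(2) subspace_scale by blast
qed

(* Graphs of partial linear functionals dominated by the norm; Zorn's lemma on them is the
   Hahn-Banach argument. *)
definition norm_dominated_graph :: "('a::real_normed_vector \<times> real) set \<Rightarrow> bool" where
  "norm_dominated_graph G \<longleftrightarrow> subspace G \<and> (\<forall>(s, a)\<in>G. a \<le> norm s)"

lemma norm_dominated_graph_unique: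
  assumes "norm_dominated_graph G" "(x, a) \<in> G" "(x, b) \<in> G"
  shows "a = b"
proof -
  have "(0, a - b) \<in> G" "(0, b - a) \<in> G"
    using assms subspace_diff[of G] unfolding norm_dominated_graph_def by fastforce+
  then have "a - b \<le> norm (0::'a)" "b - a \<le> norm (0::'a)"
    using assms(1) unfolding norm_dominated_graph_def by blast+
  then show ?thesis by simp
qed

lemma norm_dominated_graph_insert:
  assumes G: "norm_dominated_graph G"
    and c_ge: "\<And>s a. (s, a) \<in> G \<Longrightarrow> a - norm (s - x) \<le> c"
    and c_le: "\<And>s a. (s, a) \<in> G \<Longrightarrow> c \<le> norm (s + x) - a"
  shows "norm_dominated_graph (span (insert (x, c) G))"
proof -
  have Gsub: "subspace G" and Gdom: "\<And>s a. (s, a) \<in> G \<Longrightarrow> a \<le> norm s"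
    using G unfolding norm_dominated_graph_def by auto
  have extended: "a + k * c \<le> norm (s + k *\<^sub>R x)" if "(s, a) \<in> G" for s a k
  proof (cases k "0::real" rule: linorder_cases)
    case less
    define u where "u = - k"
    have u: "u > 0" and k: "k = - u" using less by (simp_all add: u_def)
    have "(s /\<^sub>R u, a / u) \<in> G"
      using subspace_scale[OF Gsub that, of "inverse u"] by (simp add: divide_inverse_commute)
    then have "a / u - norm (s /\<^sub>R u - x) \<le> c" by (rule c_ge)
    also have "s /\<^sub>R u - x = (s + k *\<^sub>R x) /\<^sub>R u"
      using u by (simp add: k algebra_simps)
    also have "norm \<dots> = norm (s + k *\<^sub>R x) / u" using u by (simp add: divide_inverse_commute)
    finally have "a - norm (s + k *\<^sub>R x) \<le> c * u" using u by (simp add: field_simps)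
    then show ?thesis by (simp add: k algebra_simps)
  next
    case greater
    have "(s /\<^sub>R k, a / k) \<in> G"
      using subspace_scale[OF Gsub that, of "inverse k"] by (simp add: divide_inverse_commute)
    then have "c \<le> norm (s /\<^sub>R k + x) - a / k" by (rule c_le)
    also have "s /\<^sub>R k + x = (s + k *\<^sub>R x) /\<^sub>R k"
      using greater by (simp add: algebra_simps)
    also have "norm \<dots> = norm (s + k *\<^sub>R x) / k" using greater by (simp add: divide_inverse_commute)
    finally show ?thesis using greater by (simp add: field_simps)
  qed (use Gdom that in simp)
  have "b \<le> norm y" if yb: "(y, b) \<in> span (insert (x, c) G)" for y b
  proof -
    obtain k where "(y, b) - k *\<^sub>R (x, c) \<in> G"
      using yb unfolding span_insert span_eq_iff[THEN iffD2, OF Gsub] by blast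
    from extended[of "y - k *\<^sub>R x" "b - k * c" k] this show ?thesis by simp
  qed
  then show ?thesis unfolding norm_dominated_graph_def by auto
qed

lemma norm_dominated_graph_extend:
  assumes G: "norm_dominated_graph G"
  shows "\<exists>c. norm_dominated_graph (span (insert (x, c) G))"
proof -
  have Gsub: "subspace G" and Gdom: "\<And>s a. (s, a) \<in> G \<Longrightarrow> a \<le> norm s"
    using G unfolding norm_dominated_graph_def by auto
  have G0: "(0, 0) \<in> G" using subspace_0[OF Gsub] by (simp add: zero_prod_def)
  have sep: "a1 - norm (s1 - x) \<le> norm (s2 + x) - a2" if "(s1, a1) \<in> G" "(s2, a2) \<in> G" for s1 a1 s2 a2
  proof -
    have "a1 + a2 \<le> norm (s1 + s2)" using Gdom subspace_add[OF Gsub that] by simp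
    also have "\<dots> \<le> norm (s1 - x) + norm (s2 + x)"
      using norm_triangle_ineq[of "s1 - x" "s2 + x"] by simp
    finally show ?thesis by simp
  qed
  define c where "c = Sup {a - norm (s - x) | s a. (s, a) \<in> G}"
  have "a - norm (s - x) \<le> c" if "(s, a) \<in> G" for s a
    unfolding c_def using that sep[OF _ G0] by (intro cSup_upper bdd_aboveI[of _ "norm x"]) auto
  moreover have "c \<le> norm (s + x) - a" if "(s, a) \<in> G" for s a
    unfolding c_def using that G0 sep by (intro cSup_least) auto
  ultimately have "norm_dominated_graph (span (insert (x, c) G))"
    by (rule norm_dominated_graph_insert[OF G])
  then show ?thesis ..
qed

lemma exists_norming_functional:
  fixes y :: "'a::real_normed_vector"
  shows "\<exists>f::'a \<Rightarrow>\<^sub>L real. norm f \<le> 1 \<and> blinfun_apply f y = norm y"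
proof -
  define \<G> where "\<G> = {G. norm_dominated_graph G \<and> (y, norm y) \<in> G}"
  have "\<exists>M\<in>\<G>. \<forall>G\<in>\<G>. M \<subseteq> G \<longrightarrow> G = M"
  proof (rule subset_Zorn_nonempty)
    have "b \<le> norm s" if "(s, b) \<in> span {(y, norm y)}" for s b
      using that by (auto simp: span_singleton abs_ge_self mult_right_mono)
    then show "\<G> \<noteq> {}"
      unfolding \<G>_def norm_dominated_graph_def by (auto intro!: exI[of _ "span {(y, norm y)}"] span_base)
  next
    fix C assume "C \<noteq> {}" "subset.chain \<G> C"
    then show "\<Union>C \<in> \<G>"
      unfolding \<G>_def norm_dominated_graph_def subset.chain_def
      by (auto intro!: subspace_Union_chain)
  qed
  then obtain M where M: "norm_dominated_graph M" "(y, norm y) \<in> M"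
    and max: "\<And>G. norm_dominated_graph G \<Longrightarrow> (y, norm y) \<in> G \<Longrightarrow> M \<subseteq> G \<Longrightarrow> G = M"
    unfolding \<G>_def by blast
  have Msub: "subspace M" using M(1) unfolding norm_dominated_graph_def by blast
  have "\<exists>a. (x, a) \<in> M" for x
  proof -
    obtain c where "norm_dominated_graph (span (insert (x, c) M))"
      using norm_dominated_graph_extend[OF M(1)] by blast
    then have "span (insert (x, c) M) = M"
      using M(2) by (intro max) (auto intro: span_superset[THEN subsetD])
    then show ?thesis using span_base[of "(x, c)" "insert (x, c) M"] by auto
  qed
  then obtain f where fM: "\<And>x. (x, f x) \<in> M" by metis
  have f_eq: "f x = a" if "(x, a) \<in> M" for x a
    using norm_dominated_graph_unique[OF M(1) fM that] .
  have f_le: "f x \<le> norm x" for x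
    using fM M(1) unfolding norm_dominated_graph_def by blast
  have lin: "linear f"
    using subspace_add[OF Msub fM fM] subspace_scale[OF Msub fM] f_eq by unfold_locales auto
  have bound: "\<bar>f x\<bar> \<le> norm x" for x
    using f_le[of x] f_le[of "- x"] linear_neg[OF lin, of x] by auto
  have bl: "bounded_linear f"
    using lin bound by (intro bounded_linear_intro[of _ 1]) (auto simp: linear_add linear_scale)
  show ?thesis
  proof (intro exI conjI)
    show "norm (Blinfun f) \<le> 1"
      using bound by (intro norm_blinfun_bound) (auto simp: bounded_linear_Blinfun_apply[OF bl])
    show "blinfun_apply (Blinfun f) y = norm y"
      using f_eq[OF M(2)] by (simp add: bounded_linear_Blinfun_apply[OF bl])
  qed
qed

lemma exists_norming_pair:
  fixes V :: "'a::real_normed_vector \<Rightarrow>\<^sub>L 'b::real_normed_vector"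
  assumes "0 \<le> r" "r < norm V"
  obtains a :: "'b \<Rightarrow>\<^sub>L real" and b :: 'a where "norm a \<le> 1" "norm b \<le> 1" "r < a (V b)"
proof -
  have "\<not> (\<forall>x. norm (V x) \<le> r * norm x)"
    using assms norm_blinfun_bound[of r V] by force
  then obtain x where x: "r * norm x < norm (V x)" by (auto simp: not_le)
  then have "x \<noteq> 0" using assms(1) by auto
  define b where "b = x /\<^sub>R norm x"
  have "norm b = 1" using \<open>x \<noteq> 0\<close> by (simp add: b_def)
  have "norm (V b) = norm (V x) / norm x"
    by (simp add: b_def blinfun.scaleR_right divide_inverse_commute)
  with x have "norm x * r < norm x * norm (V b)" using \<open>x \<noteq> 0\<close> by (simp add: field_simps)
  then have "r < norm (V b)" using \<open>x \<noteq> 0\<close> by simp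
  obtain a :: "'b \<Rightarrow>\<^sub>L real" where "norm a \<le> 1" "a (V b) = norm (V b)"
    using exists_norming_functional by blast
  then show ?thesis using \<open>norm b = 1\<close> \<open>r < norm (V b)\<close> by (intro that[of a b]) simp_all
qed

section \<open>Finite rank operators\<close>

lemma closed_span_of_coordinate_bound:
  fixes B :: "'a::real_normed_vector set"
  assumes B: "finite B" and bound: "\<And>c b. b \<in> B \<Longrightarrow> \<bar>c b\<bar> \<le> C * norm (\<Sum>b\<in>B. c b *\<^sub>R b)"
  shows "closed (span B)"
proof (unfold closed_sequential_limits, intro allI impI, elim conjE)
  fix w l assume w: "\<forall>n. w n \<in> span B" and wl: "w \<longlonglongrightarrow> l"
  have "\<forall>n. \<exists>u. (\<Sum>b\<in>B. u b *\<^sub>R b) = w n"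
    using w unfolding span_finite[OF B] by (metis (no_types, lifting) imageE)
  then obtain u where u: "\<And>n. (\<Sum>b\<in>B. u n b *\<^sub>R b) = w n" by metis
  have "Cauchy (\<lambda>n. u n b)" if b: "b \<in> B" for b
  proof (rule metric_CauchyI)
    fix e :: real assume e: "e > 0"
    obtain N where N: "\<And>m n. m \<ge> N \<Longrightarrow> n \<ge> N \<Longrightarrow> norm (w m - w n) < e / (\<bar>C\<bar> + 1)"
      using metric_CauchyD[OF LIMSEQ_imp_Cauchy[OF wl], of "e / (\<bar>C\<bar> + 1)"] e
      by (auto simp: dist_norm)
    have "dist (u m b) (u n b) < e" if "m \<ge> N" "n \<ge> N" for m n
    proof -
      have "\<bar>u m b - u n b\<bar> \<le> C * norm (w m - w n)"
        using bound[OF b, of "\<lambda>b. u m b - u n b"] by (simp add: scaleR_diff_left sum_subtractf u)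
      also have "\<dots> \<le> \<bar>C\<bar> * norm (w m - w n)" by (intro mult_right_mono) auto
      also have "\<dots> \<le> \<bar>C\<bar> * (e / (\<bar>C\<bar> + 1))"
        using N[OF that] by (intro mult_left_mono) auto
      also have "\<dots> < e" using e by (simp add: field_simps)
      finally show ?thesis by (simp add: dist_real_def)
    qed
    then show "\<exists>N. \<forall>m\<ge>N. \<forall>n\<ge>N. dist (u m b) (u n b) < e" by blast
  qed
  then have "(\<lambda>n. u n b) \<longlonglongrightarrow> lim (\<lambda>n. u n b)" if "b \<in> B" for b
    using that by (simp add: Cauchy_convergent_iff convergent_LIMSEQ_iff)
  then have "w \<longlonglongrightarrow> (\<Sum>b\<in>B. lim (\<lambda>n. u n b) *\<^sub>R b)"
    unfolding u[symmetric] by (intro tendsto_intros) auto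
  then have "l = (\<Sum>b\<in>B. lim (\<lambda>n. u n b) *\<^sub>R b)" using wl LIMSEQ_unique by blast
  then show "l \<in> span B" by (simp add: span_sum span_scale span_base)
qed

lemma abs_scale_mult_infdist_le:
  fixes e :: "'a::real_normed_vector"
  assumes "s \<in> span B"
  shows "\<bar>t\<bar> * infdist e (span B) \<le> norm (s + t *\<^sub>R e)"
proof (cases "t = 0")
  case False
  have "- (s /\<^sub>R t) \<in> span B" using assms by (intro span_neg span_scale)
  then have "infdist e (span B) \<le> dist e (- (s /\<^sub>R t))" by (rule infdist_le)
  also have "\<dots> = norm (inverse t *\<^sub>R (s + t *\<^sub>R e))"
    using False by (simp add: dist_norm scaleR_add_right add.commute)
  also have "\<dots> = norm (s + t *\<^sub>R e) / \<bar>t\<bar>" by (simp add: divide_inverse_commute)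
  finally show ?thesis using False by (simp add: field_simps)
qed simp

lemma independent_coordinate_bound:
  fixes B :: "'a::real_normed_vector set"
  assumes "finite B" "independent B"
  shows "\<exists>C\<ge>0. \<forall>c. \<forall>b\<in>B. \<bar>c b\<bar> \<le> C * norm (\<Sum>b\<in>B. c b *\<^sub>R b)"
  using assms
proof (induction B rule: finite_induct)
  case empty then show ?case by auto
next
  case (insert e B)
  have "independent B" and e_notin: "e \<notin> span B"
    using insert.prems insert.hyps(2) by (auto simp: independent_insert)
  then obtain C0 where C0: "C0 \<ge> 0" "\<And>c b. b \<in> B \<Longrightarrow> \<bar>c b\<bar> \<le> C0 * norm (\<Sum>b\<in>B. c b *\<^sub>R b)"
    using insert.IH by blast
  define d where "d = infdist e (span B)"
  have "closed (span B)" using closed_span_of_coordinate_bound[OF insert.hyps(1) C0(2)] .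
  then have "d \<noteq> 0" unfolding d_def using in_closed_iff_infdist_zero[of "span B" e] e_notin span_zero by blast
  then have d: "d > 0" using infdist_nonneg[of e "span B"] unfolding d_def by linarith
  define C where "C = max (1 / d) (C0 * (1 + norm e / d))"
  have bound: "\<bar>c b\<bar> \<le> C * norm (s + c e *\<^sub>R e)"
    if b: "b \<in> insert e B" and s: "s = (\<Sum>b\<in>B. c b *\<^sub>R b)" for c b s
  proof -
    have ce: "\<bar>c e\<bar> * d \<le> norm (s + c e *\<^sub>R e)"
      unfolding d_def s by (intro abs_scale_mult_infdist_le span_sum span_scale span_base) auto
    show ?thesis
    proof (cases "b = e")
      case True
      then have "\<bar>c b\<bar> \<le> (1 / d) * norm (s + c e *\<^sub>R e)" using ce d by (simp add: field_simps)
      also have "\<dots> \<le> C * norm (s + c e *\<^sub>R e)" unfolding C_def by (intro mult_right_mono) auto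
      finally show ?thesis .
    next
      case False
      then have "b \<in> B" using b by simp
      have "norm s \<le> norm (s + c e *\<^sub>R e) + \<bar>c e\<bar> * norm e"
        using norm_triangle_ineq4[of "s + c e *\<^sub>R e" "c e *\<^sub>R e"] by simp
      also have "\<bar>c e\<bar> * norm e \<le> (norm (s + c e *\<^sub>R e) / d) * norm e"
        using ce d by (intro mult_right_mono) (auto simp: field_simps)
      finally have "norm s \<le> (1 + norm e / d) * norm (s + c e *\<^sub>R e)" by (simp add: field_simps)
      then have "C0 * norm s \<le> (C0 * (1 + norm e / d)) * norm (s + c e *\<^sub>R e)"
        using C0(1) by (simp add: mult_left_mono mult.assoc)
      with C0(2)[OF \<open>b \<in> B\<close>, of c] have "\<bar>c b\<bar> \<le> (C0 * (1 + norm e / d)) * norm (s + c e *\<^sub>R e)"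
        unfolding s by linarith
      also have "\<dots> \<le> C * norm (s + c e *\<^sub>R e)" unfolding C_def by (intro mult_right_mono) auto
      finally show ?thesis .
    qed
  qed
  have "(\<Sum>b\<in>insert e B. c b *\<^sub>R b) = (\<Sum>b\<in>B. c b *\<^sub>R b) + c e *\<^sub>R e" for c
    using insert.hyps by simp
  with bound have "\<forall>c. \<forall>b\<in>insert e B. \<bar>c b\<bar> \<le> C * norm (\<Sum>b\<in>insert e B. c b *\<^sub>R b)" by simp
  moreover have "C \<ge> 0" unfolding C_def using d by (simp add: le_max_iff_disj)
  ultimately show ?case by blast
qed

lemma finite_rank_sum_representation:
  fixes F :: "'a::real_normed_vector \<Rightarrow>\<^sub>L 'b::real_normed_vector"
  assumes "finite_rank F"
  obtains B g where "finite B" "\<And>b. b \<in> B \<Longrightarrow> bounded_linear (g b)"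
    "\<And>x. blinfun_apply F x = (\<Sum>b\<in>B. g b x *\<^sub>R b)"
proof -
  obtain B1 where B1: "finite B1" "range (blinfun_apply F) \<subseteq> span B1"
    using assms unfolding finite_rank_def by blast
  obtain B where B: "B \<subseteq> B1" "independent B" "B1 \<subseteq> span B"
    using maximal_independent_subset by blast
  have "finite B" using B(1) B1(1) finite_subset by blast
  have F_span: "blinfun_apply F x \<in> span B" for x
    using B1(2) span_minimal[OF B(3) subspace_span] by blast
  obtain C where C: "C \<ge> 0" "\<And>c b. b \<in> B \<Longrightarrow> \<bar>c b\<bar> \<le> C * norm (\<Sum>b\<in>B. c b *\<^sub>R b)"
    using independent_coordinate_bound[OF \<open>finite B\<close> B(2)] by blast
  define g where "g b x = representation B (blinfun_apply F x) b" for b x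
  have F_eq: "blinfun_apply F x = (\<Sum>b\<in>B. g b x *\<^sub>R b)" for x
    unfolding g_def using sum_representation_eq[OF B(2) F_span \<open>finite B\<close>] by simp
  have "bounded_linear (g b)" if "b \<in> B" for b
  proof (rule bounded_linear_intro[of _ "C * norm F"])
    fix x
    have "\<bar>g b x\<bar> \<le> C * norm (blinfun_apply F x)" using C(2)[OF that, of "\<lambda>b. g b x"] F_eq by simp
    also have "\<dots> \<le> C * (norm F * norm x)" by (rule mult_left_mono[OF norm_blinfun C(1)])
    finally show "norm (g b x) \<le> norm x * (C * norm F)" by (simp add: ac_simps)
  next
    show "g b (x + y) = g b x + g b y" for x y
      unfolding g_def blinfun.add_right representation_add[OF B(2) F_span F_span] by simp
    show "g b (r *\<^sub>R x) = r *\<^sub>R g b x" for r x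
      unfolding g_def blinfun.scaleR_right representation_scale[OF B(2) F_span] by simp
  qed
  then show ?thesis using that \<open>finite B\<close> F_eq by blast
qed

section \<open>Nuclear representations\<close>

lemma summable_norm_blinfun_apply_bounded:
  fixes p :: "nat \<Rightarrow> 'a::real_normed_vector \<Rightarrow>\<^sub>L real"
  assumes p: "summable (\<lambda>n. norm (p n))" and z: "\<And>n. norm (z n) \<le> Q"
  shows "summable (\<lambda>n. norm (p n (z n)))" and "\<bar>\<Sum>n. p n (z n)\<bar> \<le> Q * (\<Sum>n. norm (p n))"
proof -
  have le: "norm (p n (z n)) \<le> Q * norm (p n)" for n
    using norm_blinfun[of "p n" "z n"] mult_left_mono[OF z[of n] norm_ge_zero[of "p n"]]
    by (simp add: mult.commute)
  show s: "summable (\<lambda>n. norm (p n (z n)))"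
    by (rule summable_comparison_test'[OF summable_mult[OF p, of Q]]) (use le in auto)
  have "\<bar>\<Sum>n. p n (z n)\<bar> \<le> (\<Sum>n. norm (p n (z n)))" using summable_norm[OF s] by simp
  also have "\<dots> \<le> (\<Sum>n. Q * norm (p n))" by (rule suminf_le[OF le s summable_mult[OF p]])
  also have "\<dots> = Q * (\<Sum>n. norm (p n))" by (rule suminf_mult[OF p])
  finally show "\<bar>\<Sum>n. p n (z n)\<bar> \<le> Q * (\<Sum>n. norm (p n))" .
qed

lemma nuclear_series_summable:
  fixes xs :: "nat \<Rightarrow> 'a::real_normed_vector \<Rightarrow>\<^sub>L real" and ys :: "nat \<Rightarrow> 'b::banach"
  assumes s: "summable (\<lambda>n. norm (xs n) * norm (ys n))"
  shows "summable (\<lambda>n. norm (xs n x *\<^sub>R ys n))"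
    and "summable (\<lambda>n. xs n x *\<^sub>R ys n)"
    and "norm (\<Sum>n. xs n x *\<^sub>R ys n) \<le> (\<Sum>n. norm (xs n) * norm (ys n)) * norm x"
proof -
  have le: "norm (xs n x *\<^sub>R ys n) \<le> norm x * (norm (xs n) * norm (ys n))" for n
    using mult_right_mono[OF norm_blinfun[of "xs n" x] norm_ge_zero[of "ys n"]]
    by (simp add: ac_simps)
  show s1: "summable (\<lambda>n. norm (xs n x *\<^sub>R ys n))"
    by (rule summable_comparison_test'[OF summable_mult[OF s, of "norm x"]]) (use le in auto)
  show "summable (\<lambda>n. xs n x *\<^sub>R ys n)" by (rule summable_norm_cancel[OF s1])
  have "norm (\<Sum>n. xs n x *\<^sub>R ys n) \<le> (\<Sum>n. norm (xs n x *\<^sub>R ys n))"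
    by (rule summable_norm[OF s1])
  also have "\<dots> \<le> (\<Sum>n. norm x * (norm (xs n) * norm (ys n)))"
    by (rule suminf_le[OF le s1 summable_mult[OF s]])
  also have "\<dots> = (\<Sum>n. norm (xs n) * norm (ys n)) * norm x"
    using suminf_mult[OF s, of "norm x"] by (simp add: mult.commute)
  finally show "norm (\<Sum>n. xs n x *\<^sub>R ys n) \<le> (\<Sum>n. norm (xs n) * norm (ys n)) * norm x" .
qed

lemma bounded_linear_nuclear_series:
  fixes xs :: "nat \<Rightarrow> 'a::real_normed_vector \<Rightarrow>\<^sub>L real" and ys :: "nat \<Rightarrow> 'b::banach"
  assumes s: "summable (\<lambda>n. norm (xs n) * norm (ys n))"
  shows "bounded_linear (\<lambda>x. \<Sum>n. xs n x *\<^sub>R ys n)"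
proof (rule bounded_linear_intro[of _ "\<Sum>n. norm (xs n) * norm (ys n)"])
  show "(\<Sum>n. xs n (x + y) *\<^sub>R ys n) = (\<Sum>n. xs n x *\<^sub>R ys n) + (\<Sum>n. xs n y *\<^sub>R ys n)" for x y
    using suminf_add[OF nuclear_series_summable(2)[OF s, of x] nuclear_series_summable(2)[OF s, of y]]
    by (simp add: blinfun.add_right scaleR_add_left)
  show "(\<Sum>n. xs n (r *\<^sub>R x) *\<^sub>R ys n) = r *\<^sub>R (\<Sum>n. xs n x *\<^sub>R ys n)" for r x
    using suminf_scaleR_right[OF nuclear_series_summable(2)[OF s, of x], of r]
    by (simp add: blinfun.scaleR_right)
  show "norm (\<Sum>n. xs n x *\<^sub>R ys n) \<le> norm x * (\<Sum>n. norm (xs n) * norm (ys n))" for x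
    using nuclear_series_summable(3)[OF s, of x] by (simp add: mult.commute)
qed

definition nuclear_op :: "(nat \<Rightarrow> ('a::banach \<Rightarrow>\<^sub>L real)) \<Rightarrow> (nat \<Rightarrow> 'a) \<Rightarrow> ('a \<Rightarrow>\<^sub>L 'a)" where
  "nuclear_op xs ys = Blinfun (\<lambda>x. \<Sum>n. xs n x *\<^sub>R ys n)"

lemma nuclear_rep_nuclear_op:
  assumes "summable (\<lambda>n. norm (xs n) * norm (ys n))"
  shows "nuclear_rep (nuclear_op xs ys) xs ys"
  using assms bounded_linear_Blinfun_apply[OF bounded_linear_nuclear_series[OF assms]]
  by (simp add: nuclear_rep_def nuclear_op_def)

lemma nuclear_rep_sums:
  assumes "nuclear_rep T xs ys"
  shows "(\<lambda>n. xs n x *\<^sub>R ys n) sums T x"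
  using assms nuclear_series_summable(2)[of xs ys x] by (simp add: nuclear_rep_def sums_iff)

lemma nuclear_norm_le_rep:
  assumes "nuclear_rep T xs ys"
  shows "nuclear_norm T \<le> (\<Sum>n. norm (xs n) * norm (ys n))"
  unfolding nuclear_norm_def
proof (rule cInf_lower)
  show "(\<Sum>n. norm (xs n) * norm (ys n)) \<in> {\<Sum>n. norm (xs n) * norm (ys n) |xs ys. nuclear_rep T xs ys}"
    using assms by blast
  show "bdd_below {\<Sum>n. norm (xs n) * norm (ys n) |xs ys. nuclear_rep T xs ys}"
    by (rule bdd_belowI[of _ 0]) (auto intro!: suminf_nonneg simp: nuclear_rep_def)
qed

lemma le_mult_nuclear_norm:
  assumes T: "T \<in> nuclear_ops" and K: "K \<ge> 0"
    and le: "\<And>xs ys. nuclear_rep T xs ys \<Longrightarrow> c \<le> K * (\<Sum>n. norm (xs n) * norm (ys n))"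
  shows "c \<le> K * nuclear_norm T"
proof (cases "K = 0")
  case True
  then show ?thesis using T le unfolding nuclear_ops_def by fastforce
next
  case False
  have "c / K \<le> nuclear_norm T"
    unfolding nuclear_norm_def
  proof (rule cInf_greatest)
    show "{\<Sum>n. norm (xs n) * norm (ys n) |xs ys. nuclear_rep T xs ys} \<noteq> {}"
      using T unfolding nuclear_ops_def by blast
    show "c / K \<le> v" if "v \<in> {\<Sum>n. norm (xs n) * norm (ys n) |xs ys. nuclear_rep T xs ys}" for v
      using that le False K by (auto simp: divide_le_eq mult.commute)
  qed
  then show ?thesis using False K by (simp add: divide_le_eq mult.commute)
qed

lemma nuclear_norm_nonneg: "T \<in> nuclear_ops \<Longrightarrow> nuclear_norm T \<ge> 0"
  using le_mult_nuclear_norm[of T 1 0] by (simp add: nuclear_rep_def suminf_nonneg)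

lemma sums_interleave:
  fixes f g :: "nat \<Rightarrow> 'b::real_normed_vector"
  assumes "f sums s" "g sums t"
  shows "(\<lambda>n. if even n then f (n div 2) else g (n div 2)) sums (s + t)"
proof -
  define f' where "f' n = (if even n then f (n div 2) else 0)" for n
  define g' where "g' n = (if even n then 0 else g (n div 2))" for n
  have "(\<lambda>n. f' (2 * n)) sums s" "(\<lambda>n. g' (2 * n + 1)) sums t"
    using assms by (simp_all add: f'_def g'_def)
  moreover have "strict_mono (\<lambda>n::nat. 2 * n)" "strict_mono (\<lambda>n::nat. 2 * n + 1)"
    by (auto intro: strict_monoI)
  moreover have "f' n = 0" if "n \<notin> range (\<lambda>n. 2 * n)" for n
    using that by (auto simp: f'_def elim!: evenE)
  moreover have "g' n = 0" if "n \<notin> range (\<lambda>n. 2 * n + 1)" for n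
    using that by (auto simp: g'_def elim!: oddE)
  ultimately have "f' sums s" "g' sums t" using sums_mono_reindex by blast+
  then have "(\<lambda>n. f' n + g' n) sums (s + t)" by (rule sums_add)
  then show ?thesis by (simp add: f'_def g'_def if_distrib cong: if_cong)
qed

lemma nuclear_rep_lincomb:
  assumes S: "nuclear_rep S xs ys" and T: "nuclear_rep T xs' ys'"
  shows "nuclear_rep (a *\<^sub>R S + b *\<^sub>R T)
           (\<lambda>n. if even n then a *\<^sub>R xs (n div 2) else b *\<^sub>R xs' (n div 2))
           (\<lambda>n. if even n then ys (n div 2) else ys' (n div 2))"
    (is "nuclear_rep _ ?xs ?ys")
proof -
  have "summable (\<lambda>n. norm (xs n) * norm (ys n))" "summable (\<lambda>n. norm (xs' n) * norm (ys' n))"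
    using S T by (simp_all add: nuclear_rep_def)
  from sums_interleave[OF sums_mult[OF summable_sums[OF this(1)]] sums_mult[OF summable_sums[OF this(2)]]]
  have "summable (\<lambda>n. if even n then \<bar>a\<bar> * (norm (xs (n div 2)) * norm (ys (n div 2)))
                      else \<bar>b\<bar> * (norm (xs' (n div 2)) * norm (ys' (n div 2))))"
    by (rule sums_summable)
  moreover have "(\<lambda>n. if even n then \<bar>a\<bar> * (norm (xs (n div 2)) * norm (ys (n div 2)))
                      else \<bar>b\<bar> * (norm (xs' (n div 2)) * norm (ys' (n div 2))))
    = (\<lambda>n. norm (?xs n) * norm (?ys n))" by auto
  moreover have "(\<lambda>n. if even n then a *\<^sub>R (xs (n div 2) x *\<^sub>R ys (n div 2))
                      else b *\<^sub>R (xs' (n div 2) x *\<^sub>R ys' (n div 2))) sums (a *\<^sub>R S + b *\<^sub>R T) x" for x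
    using sums_interleave[OF sums_scaleR_right[OF nuclear_rep_sums[OF S, of x], of a]
        sums_scaleR_right[OF nuclear_rep_sums[OF T, of x], of b]]
    by (simp add: blinfun.add_left blinfun.scaleR_left)
  moreover have "(\<lambda>n. if even n then a *\<^sub>R (xs (n div 2) x *\<^sub>R ys (n div 2))
                      else b *\<^sub>R (xs' (n div 2) x *\<^sub>R ys' (n div 2))) = (\<lambda>n. ?xs n x *\<^sub>R ?ys n)" for x
    by (auto simp: blinfun.scaleR_left)
  ultimately show ?thesis by (simp add: nuclear_rep_def sums_iff)
qed

lemma nuclear_rep_compose:
  assumes T: "nuclear_rep T xs ys"
  shows "nuclear_rep (V o\<^sub>L T) xs (\<lambda>n. V (ys n))"
proof -
  have s: "summable (\<lambda>n. norm (xs n) * norm (ys n))" using T by (simp add: nuclear_rep_def)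
  have le: "norm (xs n) * norm (V (ys n)) \<le> norm V * (norm (xs n) * norm (ys n))" for n
    using mult_left_mono[OF norm_blinfun[of V "ys n"] norm_ge_zero[of "xs n"]] by (simp add: ac_simps)
  then have "summable (\<lambda>n. norm (xs n) * norm (V (ys n)))"
    by (intro summable_comparison_test'[OF summable_mult[OF s, of "norm V"]]) auto
  moreover have "(\<lambda>n. xs n x *\<^sub>R V (ys n)) sums (V o\<^sub>L T) x" for x
    using bounded_linear.sums[OF blinfun.bounded_linear_right nuclear_rep_sums[OF T, of x], of V]
    by (simp add: blinfun.scaleR_right)
  ultimately show ?thesis by (simp add: nuclear_rep_def sums_iff)
qed

lemma nuclear_ops_compose: "T \<in> nuclear_ops \<Longrightarrow> V o\<^sub>L T \<in> nuclear_ops"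
  unfolding nuclear_ops_def using nuclear_rep_compose by blast

lemma nuclear_norm_compose_le:
  assumes "T \<in> nuclear_ops"
  shows "nuclear_norm (V o\<^sub>L T) \<le> norm V * nuclear_norm T"
proof (rule le_mult_nuclear_norm[OF assms norm_ge_zero])
  fix xs ys assume T: "nuclear_rep T xs ys"
  have s: "summable (\<lambda>n. norm (xs n) * norm (ys n))" using T by (simp add: nuclear_rep_def)
  have le: "norm (xs n) * norm (V (ys n)) \<le> norm V * (norm (xs n) * norm (ys n))" for n
    using mult_left_mono[OF norm_blinfun[of V "ys n"] norm_ge_zero[of "xs n"]] by (simp add: ac_simps)
  have VT: "nuclear_rep (V o\<^sub>L T) xs (\<lambda>n. V (ys n))" by (rule nuclear_rep_compose[OF T])
  have "nuclear_norm (V o\<^sub>L T) \<le> (\<Sum>n. norm (xs n) * norm (V (ys n)))"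
    by (rule nuclear_norm_le_rep[OF VT])
  also have "\<dots> \<le> (\<Sum>n. norm V * (norm (xs n) * norm (ys n)))"
    using VT s le by (intro suminf_le summable_mult) (auto simp: nuclear_rep_def)
  also have "\<dots> = norm V * (\<Sum>n. norm (xs n) * norm (ys n))" by (rule suminf_mult[OF s])
  finally show "nuclear_norm (V o\<^sub>L T) \<le> norm V * (\<Sum>n. norm (xs n) * norm (ys n))" .
qed

section \<open>The trace of a nuclear operator\<close>

lemma summable_divide_null_sequence:
  fixes a :: "nat \<Rightarrow> real"
  assumes a: "\<And>n. a n \<ge> 0" and s: "summable a"
  obtains u where "u \<longlonglongrightarrow> 0" "\<And>n. u n \<ge> 0" "\<And>n. a n \<noteq> 0 \<Longrightarrow> u n > 0"
    "summable (\<lambda>n. a n / u n)"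
proof -
  define r where "r n = (\<Sum>k. a (k + n))" for n
  have sr: "summable (\<lambda>k. a (k + n))" for n using summable_ignore_initial_segment[OF s] .
  have r0: "r n \<ge> 0" for n unfolding r_def using suminf_nonneg[OF sr] a by blast
  have r_Suc: "r n = a n + r (Suc n)" for n
    using suminf_split_head[OF sr[of n]] by (simp add: r_def)
  have "r \<longlonglongrightarrow> 0"
  proof (rule LIMSEQ_I)
    fix e :: real assume "e > 0"
    then obtain N where "\<forall>n\<ge>N. norm (\<Sum>i. a (i + n)) < e" using suminf_exist_split[OF _ s] by blast
    then show "\<exists>N. \<forall>n\<ge>N. norm (r n - 0) < e" unfolding r_def by auto
  qed
  then have sqrt_r: "(\<lambda>n. sqrt (r n)) \<longlonglongrightarrow> 0" using tendsto_real_sqrt by fastforce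
  \<comment> \<open>with the tails r, the quotient a n / u n telescopes to sqrt (r n) - sqrt (r (Suc n))\<close>
  define u where "u n = sqrt (r n) + sqrt (r (Suc n))" for n
  show ?thesis
  proof
    show "u \<longlonglongrightarrow> 0" unfolding u_def using tendsto_add[OF sqrt_r LIMSEQ_Suc[OF sqrt_r]] by simp
    show "u n \<ge> 0" for n unfolding u_def using r0 by simp
    show "u n > 0" if "a n \<noteq> 0" for n
      using that a[of n] r_Suc[of n] r0[of "Suc n"] r0[of n] unfolding u_def
      by (smt (verit) real_sqrt_gt_zero real_sqrt_ge_zero)
    have "\<bar>a n / u n\<bar> \<le> sqrt (r n) - sqrt (r (Suc n))" for n
    proof (cases "u n = 0")
      case True
      then show ?thesis using r_Suc[of n] a[of n] by (simp add: real_sqrt_le_mono)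
    next
      case False
      then have "u n > 0"
        using real_sqrt_ge_zero[OF r0[of n]] real_sqrt_ge_zero[OF r0[of "Suc n"]] unfolding u_def by linarith
      moreover have "a n = (sqrt (r n) - sqrt (r (Suc n))) * u n"
        using r_Suc[of n] r0[of n] r0[of "Suc n"] by (simp add: u_def algebra_simps)
      moreover have "sqrt (r (Suc n)) \<le> sqrt (r n)" using r_Suc[of n] a[of n] by (simp add: real_sqrt_le_mono)
      ultimately show ?thesis by simp
    qed
    then show "summable (\<lambda>n. a n / u n)"
      by (intro summable_comparison_test'[OF telescope_summable'[OF sqrt_r]]) auto
  qed
qed

(* Shifting weight from xs to ys turns the vectors into a null sequence, hence into a subset of a
   compact set on which the approximation property can be applied. *)
lemma nuclear_rep_rescale:
  assumes T: "nuclear_rep T xs ys"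
  obtains p :: "nat \<Rightarrow> 'a::banach \<Rightarrow>\<^sub>L real" and q :: "nat \<Rightarrow> 'a"
  where "summable (\<lambda>n. norm (p n))" "q \<longlonglongrightarrow> 0"
    "\<And>x. T x = (\<Sum>n. p n x *\<^sub>R q n)" "(\<Sum>n. p n (q n)) = (\<Sum>n. xs n (ys n))"
proof -
  obtain u where u: "u \<longlonglongrightarrow> 0" "\<And>n. u n \<ge> 0" "\<And>n. norm (xs n) * norm (ys n) \<noteq> 0 \<Longrightarrow> u n > 0"
      "summable (\<lambda>n. norm (xs n) * norm (ys n) / u n)"
    using summable_divide_null_sequence[of "\<lambda>n. norm (xs n) * norm (ys n)"] T
    unfolding nuclear_rep_def by auto
  define p where "p n = (norm (ys n) / u n) *\<^sub>R xs n" for n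
  define q where "q n = (u n / norm (ys n)) *\<^sub>R ys n" for n
  have factor: "(norm (ys n) / u n) * (u n / norm (ys n)) = 1" if "xs n \<noteq> 0" "ys n \<noteq> 0" for n
    using that u(3)[of n] by simp
  have pq: "p n x *\<^sub>R q n = xs n x *\<^sub>R ys n" for n x
    using factor[of n] by (cases "xs n = 0 \<or> ys n = 0") (auto simp: p_def q_def blinfun.scaleR_left)
  have pq_diag: "p n (q n) = xs n (ys n)" for n
    using factor[of n] by (cases "xs n = 0 \<or> ys n = 0")
      (auto simp: p_def q_def blinfun.scaleR_left blinfun.scaleR_right)
  show ?thesis
  proof (rule that)
    show "summable (\<lambda>n. norm (p n))" using u(2,4) by (simp add: p_def abs_mult mult.commute)
    have "norm (q n) \<le> u n" for n using u(2)[of n] by (simp add: q_def)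
    then show "q \<longlonglongrightarrow> 0" by (intro Lim_null_comparison[OF _ u(1)]) auto
    show "T x = (\<Sum>n. p n x *\<^sub>R q n)" for x using T by (simp add: nuclear_rep_def pq)
    show "(\<Sum>n. p n (q n)) = (\<Sum>n. xs n (ys n))" by (simp add: pq_diag)
  qed
qed

lemma finite_rank_suminf_exchange:
  fixes p :: "nat \<Rightarrow> 'a::banach \<Rightarrow>\<^sub>L real" and q :: "nat \<Rightarrow> 'a"
  assumes p: "summable (\<lambda>n. norm (p n))" and q: "\<And>n. norm (q n) \<le> Q"
    and B: "finite B" and g: "\<And>b. b \<in> B \<Longrightarrow> bounded_linear (g b)"
    and F: "\<And>z. F z = (\<Sum>b\<in>B. g b z *\<^sub>R b)"
  shows "(\<Sum>b\<in>B. g b (\<Sum>n. p n b *\<^sub>R q n)) = (\<Sum>n. p n (F (q n)))"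
proof -
  have "summable (\<lambda>n. p n b *\<^sub>R q n)" for b
  proof (rule summable_norm_cancel, rule summable_comparison_test')
    show "summable (\<lambda>n. norm b * Q * norm (p n))" by (intro summable_mult p)
    show "norm (norm (p n b *\<^sub>R q n)) \<le> norm b * Q * norm (p n)" for n
      using mult_mono[OF norm_blinfun[of "p n" b] q[of n]] by (simp add: ac_simps)
  qed
  then have "summable (\<lambda>n. g b (p n b *\<^sub>R q n))" "g b (\<Sum>n. p n b *\<^sub>R q n) = (\<Sum>n. g b (p n b *\<^sub>R q n))"
    if "b \<in> B" for b
    using bounded_linear.summable[OF g[OF that]] bounded_linear.suminf[OF g[OF that]] by blast+
  moreover have "g b (p n b *\<^sub>R q n) = p n b * g b (q n)" if "b \<in> B" for b n
    using linear_scale[OF bounded_linear.linear[OF g[OF that]]] by simp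
  ultimately have "g b (\<Sum>n. p n b *\<^sub>R q n) = (\<Sum>n. p n b * g b (q n))"
    and "summable (\<lambda>n. p n b * g b (q n))" if "b \<in> B" for b
    using that by simp_all
  then have "(\<Sum>b\<in>B. g b (\<Sum>n. p n b *\<^sub>R q n)) = (\<Sum>n. \<Sum>b\<in>B. p n b * g b (q n))"
    by (simp add: suminf_sum)
  also have "\<dots> = (\<Sum>n. p n (F (q n)))"
    by (simp add: F blinfun.sum_right blinfun.scaleR_right mult.commute)
  finally show ?thesis .
qed

lemma trace_finite_rank_approx:
  fixes p :: "nat \<Rightarrow> 'a::banach \<Rightarrow>\<^sub>L real" and q :: "nat \<Rightarrow> 'a"
  assumes p: "summable (\<lambda>n. norm (p n))" and q: "q \<longlonglongrightarrow> 0"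
    and B: "finite B" and g: "\<And>b. b \<in> B \<Longrightarrow> bounded_linear (g b)"
    and F: "\<And>z. F z = (\<Sum>b\<in>B. g b z *\<^sub>R b)"
    and approx: "\<And>n. norm (F (q n) - q n) \<le> \<epsilon>"
  shows "\<bar>(\<Sum>n. p n (q n)) - (\<Sum>b\<in>B. g b (\<Sum>n. p n b *\<^sub>R q n))\<bar> \<le> \<epsilon> * (\<Sum>n. norm (p n))"
proof -
  obtain Q where Q: "\<And>n. norm (q n) \<le> Q"
    using BseqD[OF convergent_imp_Bseq[OF convergentI[OF q]]] by blast
  then have "norm (F (q n)) \<le> Q + \<epsilon>" for n
    using norm_triangle_ineq2[of "F (q n)" "q n"] approx[of n] Q[of n] by linarith
  then have "summable (\<lambda>n. p n (F (q n)))"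
    by (rule summable_norm_cancel[OF summable_norm_blinfun_apply_bounded(1)[OF p]])
  moreover have "summable (\<lambda>n. p n (q n))"
    by (rule summable_norm_cancel[OF summable_norm_blinfun_apply_bounded(1)[OF p Q]])
  ultimately have "(\<Sum>n. p n (q n)) - (\<Sum>n. p n (F (q n))) = (\<Sum>n. p n (q n - F (q n)))"
    by (simp add: suminf_diff blinfun.diff_right)
  then have "(\<Sum>n. p n (q n)) - (\<Sum>b\<in>B. g b (\<Sum>n. p n b *\<^sub>R q n)) = (\<Sum>n. p n (q n - F (q n)))"
    by (simp add: finite_rank_suminf_exchange[OF p Q B g F])
  also have "\<bar>\<dots>\<bar> \<le> \<epsilon> * (\<Sum>n. norm (p n))"
    using approx by (intro summable_norm_blinfun_apply_bounded(2)[OF p]) (simp add: norm_minus_commute)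
  finally show ?thesis .
qed

lemma approximation_property_finite_sum:
  fixes K :: "'a::banach set"
  assumes AP: "approximation_property TYPE('a)" and "compact K" "\<epsilon> > 0"
  obtains B g where "finite B" "\<And>b. b \<in> B \<Longrightarrow> bounded_linear (g b)"
    "\<And>x. x \<in> K \<Longrightarrow> norm ((\<Sum>b\<in>B. g b x *\<^sub>R b) - x) \<le> \<epsilon>"
proof -
  obtain F :: "'a \<Rightarrow>\<^sub>L 'a" where "finite_rank F" and F: "\<forall>x\<in>K. norm (F x - x) \<le> \<epsilon>"
    using AP[unfolded approximation_property_def, rule_format, OF \<open>\<epsilon> > 0\<close> \<open>compact K\<close>] by blast
  obtain B g where "finite B" "\<And>b. b \<in> B \<Longrightarrow> bounded_linear (g b)" "\<And>x. F x = (\<Sum>b\<in>B. g b x *\<^sub>R b)"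
    using finite_rank_sum_representation[OF \<open>finite_rank F\<close>] by blast
  then show ?thesis using F by (intro that[of B g]) auto
qed

lemma nuclear_rep_trace_unique:
  fixes T :: "'a::banach \<Rightarrow>\<^sub>L 'a"
  assumes AP: "approximation_property TYPE('a)"
    and T: "nuclear_rep T xs ys" and T': "nuclear_rep T xs' ys'"
  shows "(\<Sum>n. xs n (ys n)) = (\<Sum>n. xs' n (ys' n))"
proof -
  obtain p :: "nat \<Rightarrow> 'a \<Rightarrow>\<^sub>L real" and q :: "nat \<Rightarrow> 'a"
    where p: "summable (\<lambda>n. norm (p n))" and q: "q \<longlonglongrightarrow> 0"
    and T_eq: "\<And>x. T x = (\<Sum>n. p n x *\<^sub>R q n)" and tr: "(\<Sum>n. p n (q n)) = (\<Sum>n. xs n (ys n))"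
    using nuclear_rep_rescale[OF T] by blast
  obtain p' :: "nat \<Rightarrow> 'a \<Rightarrow>\<^sub>L real" and q' :: "nat \<Rightarrow> 'a"
    where p': "summable (\<lambda>n. norm (p' n))" and q': "q' \<longlonglongrightarrow> 0"
    and T_eq': "\<And>x. T x = (\<Sum>n. p' n x *\<^sub>R q' n)" and tr': "(\<Sum>n. p' n (q' n)) = (\<Sum>n. xs' n (ys' n))"
    using nuclear_rep_rescale[OF T'] by blast
  define K where "K = insert 0 (range q) \<union> insert 0 (range q')"
  have "compact (insert 0 (range q))" "compact (insert 0 (range q'))"
    using compactin_sequence_with_limit[of euclidean q 0 "range q"]
      compactin_sequence_with_limit[of euclidean q' 0 "range q'"] q q' by simp_all
  then have "compact K" unfolding K_def by (rule compact_Un)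
  define A where "A = (\<Sum>n. norm (p n)) + (\<Sum>n. norm (p' n))"
  have "A \<ge> 0" unfolding A_def using p p' by (simp add: suminf_nonneg)
  \<comment> \<open>both traces are close to the trace of one finite rank approximation of the identity on \<open>K\<close>\<close>
  have "(\<Sum>n. p n (q n)) - (\<Sum>n. p' n (q' n)) = 0"
  proof (rule dense_eq0_I)
    fix e :: real assume "e > 0"
    then have "e / (A + 1) > 0" using \<open>A \<ge> 0\<close> by simp
    then obtain B g where B: "finite B" "\<And>b. b \<in> B \<Longrightarrow> bounded_linear (g b)"
      and approx: "\<And>x. x \<in> K \<Longrightarrow> norm ((\<Sum>b\<in>B. g b x *\<^sub>R b) - x) \<le> e / (A + 1)"
      using approximation_property_finite_sum[OF AP \<open>compact K\<close>] by blast
    have "\<bar>(\<Sum>n. p n (q n)) - (\<Sum>b\<in>B. g b (T b))\<bar> \<le> e / (A + 1) * (\<Sum>n. norm (p n))"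
      unfolding T_eq using approx
      by (intro trace_finite_rank_approx[OF p q B, where F = "\<lambda>z. \<Sum>b\<in>B. g b z *\<^sub>R b"]) (auto simp: K_def)
    moreover have "\<bar>(\<Sum>n. p' n (q' n)) - (\<Sum>b\<in>B. g b (T b))\<bar> \<le> e / (A + 1) * (\<Sum>n. norm (p' n))"
      unfolding T_eq' using approx
      by (intro trace_finite_rank_approx[OF p' q' B, where F = "\<lambda>z. \<Sum>b\<in>B. g b z *\<^sub>R b"]) (auto simp: K_def)
    ultimately have "\<bar>(\<Sum>n. p n (q n)) - (\<Sum>n. p' n (q' n))\<bar> \<le> e / (A + 1) * A"
      unfolding A_def by (simp add: distrib_left abs_diff_le_iff)
    also have "\<dots> \<le> e" using \<open>e > 0\<close> \<open>A \<ge> 0\<close> by (simp add: field_simps)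
    finally show "\<bar>(\<Sum>n. p n (q n)) - (\<Sum>n. p' n (q' n))\<bar> \<le> e" .
  qed
  then show ?thesis using tr tr' by simp
qed

definition nuclear_trace :: "('a::banach \<Rightarrow>\<^sub>L 'a) \<Rightarrow> real" where
  "nuclear_trace T = (SOME t. \<exists>xs ys. nuclear_rep T xs ys \<and> t = (\<Sum>n. xs n (ys n)))"

lemma nuclear_trace_eq:
  fixes T :: "'a::banach \<Rightarrow>\<^sub>L 'a"
  assumes AP: "approximation_property TYPE('a)" and T: "nuclear_rep T xs ys"
  shows "nuclear_trace T = (\<Sum>n. xs n (ys n))"
proof -
  have "\<exists>t. \<exists>xs ys. nuclear_rep T xs ys \<and> t = (\<Sum>n. xs n (ys n))" using T by auto
  then have "\<exists>xs ys. nuclear_rep T xs ys \<and> nuclear_trace T = (\<Sum>n. xs n (ys n))"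
    unfolding nuclear_trace_def by (rule someI_ex)
  then obtain xs' ys' where "nuclear_rep T xs' ys'" "nuclear_trace T = (\<Sum>n. xs' n (ys' n))"
    by blast
  then show ?thesis using nuclear_rep_trace_unique[OF AP _ T] by simp
qed

lemma nuclear_rep_trace_summable:
  assumes T: "nuclear_rep T xs ys"
  shows "summable (\<lambda>n. norm (xs n (ys n)))"
    and "\<bar>\<Sum>n. xs n (ys n)\<bar> \<le> (\<Sum>n. norm (xs n) * norm (ys n))"
proof -
  have le: "norm (xs n (ys n)) \<le> norm (xs n) * norm (ys n)" for n by (rule norm_blinfun)
  have s: "summable (\<lambda>n. norm (xs n) * norm (ys n))" using T by (simp add: nuclear_rep_def)
  show s': "summable (\<lambda>n. norm (xs n (ys n)))" by (rule summable_comparison_test'[OF s]) (use le in simp)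
  have "\<bar>\<Sum>n. xs n (ys n)\<bar> \<le> (\<Sum>n. norm (xs n (ys n)))" using summable_norm[OF s'] by simp
  also have "\<dots> \<le> (\<Sum>n. norm (xs n) * norm (ys n))" by (rule suminf_le[OF le s' s])
  finally show "\<bar>\<Sum>n. xs n (ys n)\<bar> \<le> (\<Sum>n. norm (xs n) * norm (ys n))" .
qed

lemma nuclear_rep_trace_sums:
  fixes T :: "'a::banach \<Rightarrow>\<^sub>L 'a"
  assumes AP: "approximation_property TYPE('a)" and T: "nuclear_rep T xs ys"
  shows "(\<lambda>n. xs n (ys n)) sums nuclear_trace T"
  using summable_norm_cancel[OF nuclear_rep_trace_summable(1)[OF T]] nuclear_trace_eq[OF AP T]
  by (simp add: sums_iff)

lemma nuclear_trace_lincomb: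
  fixes T :: "'a::banach \<Rightarrow>\<^sub>L 'a"
  assumes AP: "approximation_property TYPE('a)"
    and "S \<in> nuclear_ops" "T \<in> nuclear_ops"
  shows "nuclear_trace (a *\<^sub>R S + b *\<^sub>R T) = a * nuclear_trace S + b * nuclear_trace T"
proof -
  obtain xs ys xs' ys' where S: "nuclear_rep S xs ys" and T: "nuclear_rep T xs' ys'"
    using assms(2,3) unfolding nuclear_ops_def by blast
  from sums_interleave[OF sums_mult[OF nuclear_rep_trace_sums[OF AP S]] sums_mult[OF nuclear_rep_trace_sums[OF AP T]]]
  have "(\<lambda>n. if even n then a * xs (n div 2) (ys (n div 2)) else b * xs' (n div 2) (ys' (n div 2)))
          sums (a * nuclear_trace S + b * nuclear_trace T)" .
  moreover have "(\<lambda>n. if even n then a * xs (n div 2) (ys (n div 2)) else b * xs' (n div 2) (ys' (n div 2)))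
    = (\<lambda>n. (if even n then a *\<^sub>R xs (n div 2) else b *\<^sub>R xs' (n div 2))
              (if even n then ys (n div 2) else ys' (n div 2)))"
    by (auto simp: blinfun.scaleR_left)
  ultimately show ?thesis
    using sums_unique2[OF nuclear_rep_trace_sums[OF AP nuclear_rep_lincomb[OF S T]]] by simp
qed

lemma abs_nuclear_trace_le:
  fixes T :: "'a::banach \<Rightarrow>\<^sub>L 'a"
  assumes AP: "approximation_property TYPE('a)" and "T \<in> nuclear_ops"
  shows "\<bar>nuclear_trace T\<bar> \<le> nuclear_norm T"
proof -
  have "\<bar>nuclear_trace T\<bar> \<le> 1 * nuclear_norm T"
  proof (rule le_mult_nuclear_norm[OF assms(2)])
    fix xs ys assume T: "nuclear_rep T xs ys"
    show "\<bar>nuclear_trace T\<bar> \<le> 1 * (\<Sum>n. norm (xs n) * norm (ys n))"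
      using nuclear_rep_trace_summable(2)[OF T] nuclear_trace_eq[OF AP T] by simp
  qed simp
  then show ?thesis by simp
qed

lemma nuclear_trace_compose_sum:
  fixes T :: "'a::banach \<Rightarrow>\<^sub>L 'a"
  assumes AP: "approximation_property TYPE('a)" and "T \<in> nuclear_ops"
  shows "nuclear_trace ((\<Sum>k\<in>F. c k *\<^sub>R V k) o\<^sub>L T) = (\<Sum>k\<in>F. c k * nuclear_trace (V k o\<^sub>L T))"
proof -
  obtain xs ys where T: "nuclear_rep T xs ys" using assms(2) unfolding nuclear_ops_def by blast
  note sums = nuclear_rep_trace_sums[OF AP nuclear_rep_compose[OF T]]
  have "(\<lambda>n. c k * xs n (V k (ys n))) sums (c k * nuclear_trace (V k o\<^sub>L T))" for k
    by (rule sums_mult[OF sums])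
  then have "(\<lambda>n. \<Sum>k\<in>F. c k * xs n (V k (ys n))) sums (\<Sum>k\<in>F. c k * nuclear_trace (V k o\<^sub>L T))"
    by (rule sums_sum)
  moreover have "(\<lambda>n. \<Sum>k\<in>F. c k * xs n (V k (ys n))) = (\<lambda>n. xs n ((\<Sum>k\<in>F. c k *\<^sub>R V k) (ys n)))"
    by (simp add: blinfun.sum_left blinfun.sum_right blinfun.scaleR_left blinfun.scaleR_right)
  ultimately have "(\<lambda>n. xs n ((\<Sum>k\<in>F. c k *\<^sub>R V k) (ys n))) sums (\<Sum>k\<in>F. c k * nuclear_trace (V k o\<^sub>L T))"
    by simp
  from sums_unique2[OF sums this] show ?thesis .
qed

section \<open>Neumann series on \<open>\<ell>\<^sub>1\<close>\<close>

lemma ell1_summable: "f \<in> ell1 \<Longrightarrow> summable (\<lambda>n. \<bar>f n\<bar>)"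
  unfolding ell1_def by simp

lemma sum_abs_le_ell1_norm:
  assumes "finite J" "f \<in> ell1"
  shows "(\<Sum>j\<in>J. \<bar>f j\<bar>) \<le> ell1_norm f"
  unfolding ell1_norm_def using assms by (intro sum_le_suminf ell1_summable) auto

lemma abs_le_ell1_norm: "f \<in> ell1 \<Longrightarrow> \<bar>f j\<bar> \<le> ell1_norm f"
  using sum_abs_le_ell1_norm[of "{j}" f] by simp

lemma ell1_bounded_partial_sums:
  assumes "\<And>n. (\<Sum>j<n. \<bar>f j\<bar>) \<le> C"
  shows "f \<in> ell1" and "ell1_norm f \<le> C"
proof -
  have s: "summable (\<lambda>j. \<bar>f j\<bar>)" by (rule summableI_nonneg_bounded[where x=C]) (use assms in auto)
  then show "f \<in> ell1" unfolding ell1_def by simp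
  show "ell1_norm f \<le> C" unfolding ell1_norm_def by (rule suminf_le_const[OF s assms])
qed

lemma ell1_lincomb:
  assumes "f \<in> ell1" "g \<in> ell1"
  shows "(\<lambda>n. a * f n + b * g n) \<in> ell1"
proof -
  have "\<bar>a * f n + b * g n\<bar> \<le> \<bar>a\<bar> * \<bar>f n\<bar> + \<bar>b\<bar> * \<bar>g n\<bar>" for n
    by (metis abs_mult abs_triangle_ineq)
  then show ?thesis
    using assms unfolding ell1_def
    by (auto intro!: summable_comparison_test'[of "\<lambda>n. \<bar>a\<bar> * \<bar>f n\<bar> + \<bar>b\<bar> * \<bar>g n\<bar>"] summable_add summable_mult)
qed

definition matrix_apply :: "(nat \<Rightarrow> nat \<Rightarrow> real) \<Rightarrow> (nat \<Rightarrow> real) \<Rightarrow> nat \<Rightarrow> real" where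
  "matrix_apply e f j = (\<Sum>i. e j i * f i)"

locale small_column_matrix =
  fixes e :: "nat \<Rightarrow> nat \<Rightarrow> real" and \<theta> :: real
  assumes column_sum: "\<And>i J. finite J \<Longrightarrow> (\<Sum>j\<in>J. \<bar>e j i\<bar>) \<le> \<theta>" and \<theta>_less_1: "\<theta> < 1"
begin

lemma \<theta>_nonneg: "\<theta> \<ge> 0"
  using column_sum[of "{}"] by simp

lemma row_summable:
  assumes f: "f \<in> ell1"
  shows "summable (\<lambda>i. \<bar>e j i * f i\<bar>)" and "summable (\<lambda>i. e j i * f i)"
proof -
  have "\<bar>e j i * f i\<bar> \<le> \<theta> * \<bar>f i\<bar>" for i
    using column_sum[of "{j}" i] by (simp add: abs_mult mult_right_mono)
  then show s: "summable (\<lambda>i. \<bar>e j i * f i\<bar>)"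
    by (intro summable_comparison_test'[OF summable_mult[OF ell1_summable[OF f]]]) auto
  show "summable (\<lambda>i. e j i * f i)" using summable_rabs_cancel[OF s] .
qed

lemma matrix_apply_ell1:
  assumes f: "f \<in> ell1"
  shows "matrix_apply e f \<in> ell1" and "ell1_norm (matrix_apply e f) \<le> \<theta> * ell1_norm f"
proof -
  have "(\<Sum>j<n. \<bar>matrix_apply e f j\<bar>) \<le> \<theta> * ell1_norm f" for n
  proof -
    have "(\<Sum>j<n. \<bar>matrix_apply e f j\<bar>) \<le> (\<Sum>j<n. \<Sum>i. \<bar>e j i * f i\<bar>)"
      unfolding matrix_apply_def by (intro sum_mono summable_rabs row_summable(1)[OF f])
    also have "\<dots> = (\<Sum>i. \<Sum>j<n. \<bar>e j i * f i\<bar>)"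
      by (rule suminf_sum[symmetric]) (rule row_summable(1)[OF f])
    also have "\<dots> \<le> (\<Sum>i. \<theta> * \<bar>f i\<bar>)"
    proof (rule suminf_le)
      show "(\<Sum>j<n. \<bar>e j i * f i\<bar>) \<le> \<theta> * \<bar>f i\<bar>" for i
        using mult_right_mono[OF column_sum[of "{..<n}" i] abs_ge_zero[of "f i"]]
        by (simp add: abs_mult sum_distrib_right)
      show "summable (\<lambda>i. \<Sum>j<n. \<bar>e j i * f i\<bar>)" by (intro summable_sum row_summable(1)[OF f])
      show "summable (\<lambda>i. \<theta> * \<bar>f i\<bar>)" by (intro summable_mult ell1_summable[OF f])
    qed
    also have "\<dots> = \<theta> * ell1_norm f"
      unfolding ell1_norm_def by (rule suminf_mult[OF ell1_summable[OF f]])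
    finally show ?thesis .
  qed
  then show "matrix_apply e f \<in> ell1" "ell1_norm (matrix_apply e f) \<le> \<theta> * ell1_norm f"
    by (rule ell1_bounded_partial_sums)+
qed

lemma matrix_apply_lincomb:
  assumes f: "f \<in> ell1" and g: "g \<in> ell1"
  shows "matrix_apply e (\<lambda>n. a * f n + b * g n) j = a * matrix_apply e f j + b * matrix_apply e g j"
proof -
  have "matrix_apply e (\<lambda>n. a * f n + b * g n) j = (\<Sum>i. a * (e j i * f i) + b * (e j i * g i))"
    unfolding matrix_apply_def by (simp add: algebra_simps)
  also have "\<dots> = a * matrix_apply e f j + b * matrix_apply e g j"
    unfolding matrix_apply_def
    by (simp add: suminf_add[symmetric] suminf_mult summable_mult row_summable(2) f g)
  finally show ?thesis .
qed

lemma plus_matrix_apply_injective: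
  assumes f: "f \<in> ell1" and g: "g \<in> ell1"
    and eq: "\<And>j. f j + matrix_apply e f j = g j + matrix_apply e g j"
  shows "f = g"
proof -
  define d where "d n = 1 * f n + (- 1) * g n" for n
  have d: "d \<in> ell1" unfolding d_def by (rule ell1_lincomb[OF f g])
  have "d j = - matrix_apply e d j" for j
    using eq[of j] unfolding d_def matrix_apply_lincomb[OF f g] by simp
  then have "ell1_norm d = ell1_norm (matrix_apply e d)" by (simp add: ell1_norm_def)
  also have "\<dots> \<le> \<theta> * ell1_norm d" by (rule matrix_apply_ell1(2)[OF d])
  finally have "(1 - \<theta>) * ell1_norm d \<le> 0" by (simp add: algebra_simps)
  then have "ell1_norm d \<le> 0" using \<theta>_less_1 by (simp add: mult_le_0_iff)
  then have "d j = 0" for j using abs_le_ell1_norm[OF d, of j] by simp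
  then show ?thesis by (auto simp: d_def)
qed

end

(* neumann_term e h k = (- e)^k h, so that neumann_sum e h = (I + e)^-1 h. *)
primrec neumann_term :: "(nat \<Rightarrow> nat \<Rightarrow> real) \<Rightarrow> (nat \<Rightarrow> real) \<Rightarrow> nat \<Rightarrow> nat \<Rightarrow> real" where
  "neumann_term e h 0 = h"
| "neumann_term e h (Suc k) = (\<lambda>j. - matrix_apply e (neumann_term e h k) j)"

definition neumann_sum :: "(nat \<Rightarrow> nat \<Rightarrow> real) \<Rightarrow> (nat \<Rightarrow> real) \<Rightarrow> nat \<Rightarrow> real" where
  "neumann_sum e h j = (\<Sum>k. neumann_term e h k j)"

context small_column_matrix
begin

lemma geometric_\<theta>: "summable (\<lambda>k. \<theta> ^ k)" "(\<Sum>k. \<theta> ^ k) = 1 / (1 - \<theta>)"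
  using summable_geometric[of \<theta>] suminf_geometric[of \<theta>] \<theta>_nonneg \<theta>_less_1 by auto

lemma neumann_term_ell1:
  assumes h: "h \<in> ell1"
  shows "neumann_term e h k \<in> ell1 \<and> ell1_norm (neumann_term e h k) \<le> \<theta> ^ k * ell1_norm h"
proof (induction k)
  case (Suc k)
  then have N: "neumann_term e h k \<in> ell1" by simp
  have "ell1_norm (neumann_term e h (Suc k)) = ell1_norm (matrix_apply e (neumann_term e h k))"
    by (simp add: ell1_norm_def)
  also have "\<dots> \<le> \<theta> * ell1_norm (neumann_term e h k)" by (rule matrix_apply_ell1(2)[OF N])
  also have "\<dots> \<le> \<theta> * (\<theta> ^ k * ell1_norm h)" using Suc \<theta>_nonneg by (simp add: mult_left_mono)
  finally show ?case using matrix_apply_ell1(1)[OF N] by (simp add: ell1_def)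
qed (use h in simp)

lemma neumann_term_summable:
  assumes h: "h \<in> ell1"
  shows "summable (\<lambda>k. \<bar>neumann_term e h k j\<bar>)" and "summable (\<lambda>k. neumann_term e h k j)"
proof -
  have "\<bar>neumann_term e h k j\<bar> \<le> ell1_norm h * \<theta> ^ k" for k
    using order_trans[OF abs_le_ell1_norm conjunct2] neumann_term_ell1[OF h, of k]
    by (simp add: mult.commute)
  then show s: "summable (\<lambda>k. \<bar>neumann_term e h k j\<bar>)"
    by (intro summable_comparison_test'[OF summable_mult[OF geometric_\<theta>(1)]]) auto
  show "summable (\<lambda>k. neumann_term e h k j)" using summable_rabs_cancel[OF s] .
qed

lemma neumann_sum_tail:
  assumes h: "h \<in> ell1"
  defines "R \<equiv> \<lambda>K j. neumann_sum e h j - (\<Sum>k<K. neumann_term e h k j)"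
  shows "R K \<in> ell1" and "ell1_norm (R K) \<le> \<theta> ^ K / (1 - \<theta>) * ell1_norm h"
proof -
  have R_eq: "R K j = (\<Sum>k. neumann_term e h (k + K) j)" for j
    unfolding R_def neumann_sum_def
    using suminf_minus_initial_segment[OF neumann_term_summable(2)[OF h], of K] by simp
  have "(\<Sum>j<n. \<bar>R K j\<bar>) \<le> \<theta> ^ K / (1 - \<theta>) * ell1_norm h" for n
  proof -
    note s = summable_ignore_initial_segment[OF neumann_term_summable(1)[OF h], of K]
    have "(\<Sum>j<n. \<bar>R K j\<bar>) \<le> (\<Sum>j<n. \<Sum>k. \<bar>neumann_term e h (k + K) j\<bar>)"
      unfolding R_eq by (intro sum_mono summable_rabs s)
    also have "\<dots> = (\<Sum>k. \<Sum>j<n. \<bar>neumann_term e h (k + K) j\<bar>)"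
      by (rule suminf_sum[symmetric]) (rule s)
    also have "\<dots> \<le> (\<Sum>k. \<theta> ^ K * ell1_norm h * \<theta> ^ k)"
    proof (rule suminf_le)
      show "(\<Sum>j<n. \<bar>neumann_term e h (k + K) j\<bar>) \<le> \<theta> ^ K * ell1_norm h * \<theta> ^ k" for k
        using order_trans[OF sum_abs_le_ell1_norm[of "{..<n}"] conjunct2[OF neumann_term_ell1[OF h, of "k + K"]]]
          neumann_term_ell1[OF h, of "k + K"]
        by (simp add: power_add ac_simps)
      show "summable (\<lambda>k. \<Sum>j<n. \<bar>neumann_term e h (k + K) j\<bar>)" by (intro summable_sum s)
      show "summable (\<lambda>k. \<theta> ^ K * ell1_norm h * \<theta> ^ k)" by (intro summable_mult geometric_\<theta>(1))
    qed
    also have "\<dots> = \<theta> ^ K / (1 - \<theta>) * ell1_norm h"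
      using suminf_mult[OF geometric_\<theta>(1), of "\<theta> ^ K * ell1_norm h"] geometric_\<theta>(2) by simp
    finally show ?thesis .
  qed
  then show "R K \<in> ell1" "ell1_norm (R K) \<le> \<theta> ^ K / (1 - \<theta>) * ell1_norm h"
    by (rule ell1_bounded_partial_sums)+
qed

lemma neumann_sum_ell1:
  assumes "h \<in> ell1"
  shows "neumann_sum e h \<in> ell1" and "ell1_norm (neumann_sum e h) \<le> ell1_norm h / (1 - \<theta>)"
  using neumann_sum_tail[OF assms, of 0] by simp_all

lemma neumann_sum_solves:
  assumes h: "h \<in> ell1"
  shows "neumann_sum e h j + matrix_apply e (neumann_sum e h) j = h j"
proof -
  define P where "P K j = (\<Sum>k<K. neumann_term e h k j)" for K j
  have R: "(\<lambda>j. neumann_sum e h j - P K j) \<in> ell1"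
    "ell1_norm (\<lambda>j. neumann_sum e h j - P K j) \<le> \<theta> ^ K / (1 - \<theta>) * ell1_norm h" for K
    using neumann_sum_tail[OF h, of K] unfolding P_def by auto
  have N: "neumann_sum e h \<in> ell1" by (rule neumann_sum_ell1(1)[OF h])
  have P: "P K \<in> ell1" for K
    using ell1_lincomb[OF N R(1)[of K], of 1 "-1"] by simp
  \<comment> \<open>the partial sums telescope: their images under the matrix are the shifted partial sums\<close>
  have "matrix_apply e (P K) j = - (\<Sum>k<K. neumann_term e h (Suc k) j)" for K
    unfolding matrix_apply_def P_def sum_distrib_left
    by (simp add: suminf_sum[symmetric] row_summable(2) neumann_term_ell1[OF h] matrix_apply_def
        sum_negf)
  then have "(\<lambda>K. matrix_apply e (P K) j) \<longlonglongrightarrow> - (\<Sum>k. neumann_term e h (Suc k) j)"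
    using summable_ignore_initial_segment[OF neumann_term_summable(2)[OF h], of 1]
    by (simp add: summable_LIMSEQ tendsto_minus)
  moreover have "(\<lambda>K. matrix_apply e (P K) j) \<longlonglongrightarrow> matrix_apply e (neumann_sum e h) j"
  proof (rule LIM_zero_cancel, rule Lim_null_comparison)
    have "\<bar>matrix_apply e (P K) j - matrix_apply e (neumann_sum e h) j\<bar>
        = \<bar>matrix_apply e (\<lambda>i. neumann_sum e h i - P K i) j\<bar>" for K
      using matrix_apply_lincomb[OF N P[of K], of 1 "-1" j] by (simp add: abs_minus_commute)
    also have "\<dots> K \<le> \<theta> * (\<theta> ^ K / (1 - \<theta>) * ell1_norm h)" for K
      using abs_le_ell1_norm[OF matrix_apply_ell1(1)[OF R(1)]] matrix_apply_ell1(2)[OF R(1)]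
        mult_left_mono[OF R(2) \<theta>_nonneg]
      by (meson order_trans)
    finally show "\<forall>\<^sub>F K in sequentially.
        norm (matrix_apply e (P K) j - matrix_apply e (neumann_sum e h) j) \<le> \<theta> * (\<theta> ^ K / (1 - \<theta>) * ell1_norm h)"
      by simp
    show "(\<lambda>K. \<theta> * (\<theta> ^ K / (1 - \<theta>) * ell1_norm h)) \<longlonglongrightarrow> 0"
      using LIMSEQ_power_zero[of \<theta>] \<theta>_nonneg \<theta>_less_1 by (auto intro!: tendsto_mult_right_zero tendsto_mult_left_zero tendsto_divide_zero)
  qed
  ultimately have "matrix_apply e (neumann_sum e h) j = - (\<Sum>k. neumann_term e h (Suc k) j)"
    using LIMSEQ_unique by blast
  also have "(\<Sum>k. neumann_term e h (Suc k) j) = neumann_sum e h j - h j"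
    unfolding neumann_sum_def using suminf_split_head[OF neumann_term_summable(2)[OF h]] by simp
  finally show ?thesis by simp
qed

lemma neumann_sum_plus_matrix_apply:
  assumes f: "f \<in> ell1"
  shows "neumann_sum e (\<lambda>j. f j + matrix_apply e f j) = f"
proof -
  have h: "(\<lambda>j. f j + matrix_apply e f j) \<in> ell1"
    using ell1_lincomb[OF f matrix_apply_ell1(1)[OF f], of 1 1] by simp
  show ?thesis
    by (rule plus_matrix_apply_injective[OF neumann_sum_ell1(1)[OF h] f])
       (use neumann_sum_solves[OF h] in simp)
qed

lemma neumann_sum_lincomb:
  assumes h: "h \<in> ell1" and h': "h' \<in> ell1"
  shows "neumann_sum e (\<lambda>n. a * h n + b * h' n) = (\<lambda>n. a * neumann_sum e h n + b * neumann_sum e h' n)"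
proof (rule plus_matrix_apply_injective)
  have N: "neumann_sum e h \<in> ell1" "neumann_sum e h' \<in> ell1" using neumann_sum_ell1(1) h h' by auto
  show "neumann_sum e (\<lambda>n. a * h n + b * h' n) \<in> ell1"
    by (intro neumann_sum_ell1(1) ell1_lincomb h h')
  show "(\<lambda>n. a * neumann_sum e h n + b * neumann_sum e h' n) \<in> ell1" by (intro ell1_lincomb N)
  show "neumann_sum e (\<lambda>n. a * h n + b * h' n) j + matrix_apply e (neumann_sum e (\<lambda>n. a * h n + b * h' n)) j
      = (a * neumann_sum e h j + b * neumann_sum e h' j) + matrix_apply e (\<lambda>n. a * neumann_sum e h n + b * neumann_sum e h' n) j" for j
    using neumann_sum_solves[OF ell1_lincomb[OF h h'], of a b j] neumann_sum_solves[OF h, of j, symmetric]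
      neumann_sum_solves[OF h', of j, symmetric] matrix_apply_lincomb[OF N, of a b j]
    by (simp add: algebra_simps)
qed

end

section \<open>A gliding hump\<close>

lemma bounded_rows_convergent_subseq:
  fixes m :: "nat \<Rightarrow> nat \<Rightarrow> real"
  assumes bound: "\<And>j n. \<bar>m j n\<bar> \<le> M"
  obtains \<sigma> where "strict_mono \<sigma>" "\<And>j. convergent (\<lambda>k. m j (\<sigma> k))"
proof -
  interpret S: subseqs "\<lambda>j s. convergent (\<lambda>k. m j (s k))"
  proof
    fix j and s :: "nat \<Rightarrow> nat"
    have "bounded (range (\<lambda>k. m j (s k)))"
      unfolding bounded_iff using bound by (intro exI[of _ M]) auto
    then obtain l r where "strict_mono r" "((\<lambda>k. m j (s k)) \<circ> r) \<longlonglongrightarrow> l"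
      using bounded_imp_convergent_subsequence by blast
    then show "\<exists>r. strict_mono r \<and> convergent (\<lambda>k. m j ((s \<circ> r) k))"
      by (auto simp: convergent_def o_def)
  qed
  have "convergent (\<lambda>k. m j (S.diagseq k))" for j
  proof -
    have "convergent (\<lambda>k. m j ((S.diagseq \<circ> (+) (Suc j)) k))"
    proof (rule S.diagseq_holds)
      show "convergent (\<lambda>k. m n ((s \<circ> r) k))"
        if "strict_mono r" "convergent (\<lambda>k. m n (s k))" for r s n
        using that by (auto simp: convergent_def o_def intro: LIMSEQ_subseq_LIMSEQ[unfolded o_def])
    qed
    then show ?thesis
      using convergent_ignore_initial_segment[of "\<lambda>k. m j (S.diagseq k)" "Suc j"]
      by (simp add: o_def add.commute)
  qed
  then show ?thesis using that S.subseq_diagseq by blast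
qed

lemma summable_tail_small:
  fixes g :: "nat \<Rightarrow> real"
  assumes s: "summable (\<lambda>j. \<bar>g j\<bar>)" and e: "e > 0"
  obtains N where "\<And>J. finite J \<Longrightarrow> J \<subseteq> {N..} \<Longrightarrow> (\<Sum>j\<in>J. \<bar>g j\<bar>) \<le> e"
proof -
  obtain N where N: "norm (\<Sum>i. \<bar>g (i + N)\<bar>) < e" using suminf_exist_split[OF e s] by blast
  have "(\<Sum>j\<in>J. \<bar>g j\<bar>) \<le> e" if J: "finite J" "J \<subseteq> {N..}" for J
  proof -
    have J_eq: "J = (\<lambda>i. i + N) ` ((\<lambda>j. j - N) ` J)" using J(2) by (force simp: image_iff)
    have "(\<Sum>j\<in>J. \<bar>g j\<bar>) = (\<Sum>i\<in>(\<lambda>j. j - N) ` J. \<bar>g (i + N)\<bar>)"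
      by (subst J_eq, subst sum.reindex) (auto intro: inj_onI)
    also have "\<dots> \<le> (\<Sum>i. \<bar>g (i + N)\<bar>)"
      using summable_ignore_initial_segment[OF s] J(1) by (intro sum_le_suminf) auto
    finally show ?thesis using N by simp
  qed
  then show ?thesis using that by blast
qed

lemma strict_mono_dominating:
  fixes G :: "nat \<Rightarrow> nat \<Rightarrow> nat"
  obtains k :: "nat \<Rightarrow> nat" where "strict_mono k" "k 0 = N" "\<And>l i. l < i \<Longrightarrow> G (k l) l \<le> k i"
proof -
  define k where "k = rec_nat N (\<lambda>_ x. Suc x + (\<Sum>a\<le>x. \<Sum>l\<le>x. G a l))"
  have k0: "k 0 = N" and kS: "k (Suc i) = Suc (k i) + (\<Sum>a\<le>k i. \<Sum>l\<le>k i. G a l)" for i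
    by (simp_all add: k_def)
  have mono: "strict_mono k" by (rule strict_monoI_Suc) (simp add: kS)
  have "G (k l) l \<le> k i" if "l < i" for l i
  proof -
    obtain i' where i: "i = Suc i'" and "l \<le> i'" using \<open>l < i\<close> by (cases i) auto
    then have "k l \<le> k i'" "l \<le> k i'"
      using mono seq_suble[OF mono, of i'] by (auto simp: strict_mono_less_eq)
    then have "G (k l) l \<le> (\<Sum>l'\<le>k i'. G (k l) l')" by (intro member_le_sum) auto
    also have "\<dots> \<le> (\<Sum>a\<le>k i'. \<Sum>l'\<le>k i'. G a l')"
      using \<open>k l \<le> k i'\<close> by (intro member_le_sum[of "k l" _ "\<lambda>a. \<Sum>l'\<le>k i'. G a l'"]) auto
    also have "\<dots> \<le> k i" by (simp add: i kS)
    finally show ?thesis .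
  qed
  then show ?thesis using that mono k0 by blast
qed

lemma bounded_columns_row_limits:
  fixes m :: "nat \<Rightarrow> nat \<Rightarrow> real"
  assumes col: "\<And>n J. finite J \<Longrightarrow> (\<Sum>j\<in>J. \<bar>m j n\<bar>) \<le> M"
  obtains \<sigma> r where "strict_mono \<sigma>" "\<And>j. (\<lambda>k. m j (\<sigma> k)) \<longlonglongrightarrow> r j" "summable (\<lambda>j. \<bar>r j\<bar>)"
proof -
  obtain \<sigma> where \<sigma>: "strict_mono \<sigma>" "\<And>j. convergent (\<lambda>k. m j (\<sigma> k))"
    using bounded_rows_convergent_subseq[of m M] col[of "{_}"] by auto
  define r where "r j = lim (\<lambda>k. m j (\<sigma> k))" for j
  have r: "(\<lambda>k. m j (\<sigma> k)) \<longlonglongrightarrow> r j" for j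
    unfolding r_def using \<sigma>(2) by (simp add: convergent_LIMSEQ_iff)
  have "(\<Sum>j\<in>J. \<bar>r j\<bar>) \<le> M" if "finite J" for J
  proof (rule LIMSEQ_le_const2)
    show "(\<lambda>k. \<Sum>j\<in>J. \<bar>m j (\<sigma> k)\<bar>) \<longlonglongrightarrow> (\<Sum>j\<in>J. \<bar>r j\<bar>)" by (intro tendsto_sum tendsto_rabs r)
  qed (use col[OF that] in auto)
  then have "summable (\<lambda>j. \<bar>r j\<bar>)" by (intro summableI_nonneg_bounded[where x=M]) auto
  then show ?thesis by (rule that[OF \<sigma>(1) r])
qed

(* An entry m (s l) (s i) with l < i is close to the limit r (s l) of its row, and these limits
   have a small tail; with l > i it lies in the small tail of column s i. *)
lemma gliding_hump_estimate:
  fixes m :: "nat \<Rightarrow> nat \<Rightarrow> real" and s :: "nat \<Rightarrow> nat"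
  assumes s: "strict_mono s" and s_ge: "\<And>l. N \<le> s l"
    and r_tail: "\<And>J. finite J \<Longrightarrow> J \<subseteq> {N..} \<Longrightarrow> (\<Sum>j\<in>J. \<bar>r j\<bar>) \<le> e"
    and row: "\<And>l i. l < i \<Longrightarrow> \<bar>m (s l) (s i) - r (s l)\<bar> \<le> e * (1/2) ^ Suc l"
    and column_tail: "\<And>i J. finite J \<Longrightarrow> J \<subseteq> s ` {i<..} \<Longrightarrow> (\<Sum>j\<in>J. \<bar>m j (s i)\<bar>) \<le> e"
  shows "(\<Sum>l\<in>{..<L} - {i}. \<bar>m (s l) (s i)\<bar>) \<le> 3 * e"
proof -
  define A where "A = {l. l < L \<and> l < i}"
  define B where "B = {l. l < L \<and> i < l}"
  have inj: "inj_on s X" for X using strict_mono_imp_inj_on[OF s] by (rule inj_on_subset) (rule subset_UNIV)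
  have "e \<ge> 0" using r_tail[of "{}"] by simp
  have "\<bar>m (s l) (s i)\<bar> \<le> \<bar>r (s l)\<bar> + e * (1/2) ^ Suc l" if "l \<in> A" for l
    using row[of l i] abs_triangle_ineq2[of "m (s l) (s i)" "r (s l)"] that by (simp add: A_def)
  then have "(\<Sum>l\<in>A. \<bar>m (s l) (s i)\<bar>) \<le> (\<Sum>l\<in>A. \<bar>r (s l)\<bar> + e * (1/2) ^ Suc l)"
    by (rule sum_mono)
  also have "\<dots> = (\<Sum>j\<in>s ` A. \<bar>r j\<bar>) + e * (\<Sum>l\<in>A. (1/2) ^ Suc l)"
    by (simp add: sum.distrib sum_distrib_left sum.reindex[OF inj])
  finally have sum_A: "(\<Sum>l\<in>A. \<bar>m (s l) (s i)\<bar>) \<le> (\<Sum>j\<in>s ` A. \<bar>r j\<bar>) + e * (\<Sum>l\<in>A. (1/2) ^ Suc l)" .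
  have "(\<Sum>l\<in>A. (1/2::real) ^ Suc l) \<le> (\<Sum>l<i. (1/2) ^ Suc l)"
    by (intro sum_mono2) (auto simp: A_def)
  also have "(\<Sum>l<i. (1/2::real) ^ Suc l) = 1 - (1/2) ^ i" by (induction i) (auto simp: field_simps)
  also have "\<dots> \<le> 1" by simp
  finally have "e * (\<Sum>l\<in>A. (1/2) ^ Suc l) \<le> e"
    using \<open>e \<ge> 0\<close> by (intro mult_left_le) auto
  moreover have "(\<Sum>j\<in>s ` A. \<bar>r j\<bar>) \<le> e" using s_ge by (intro r_tail) (auto simp: A_def)
  ultimately have "(\<Sum>l\<in>A. \<bar>m (s l) (s i)\<bar>) \<le> 2 * e" using sum_A by linarith
  moreover have "(\<Sum>l\<in>B. \<bar>m (s l) (s i)\<bar>) = (\<Sum>j\<in>s ` B. \<bar>m j (s i)\<bar>)"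
    by (simp add: sum.reindex[OF inj])
  moreover have "(\<Sum>j\<in>s ` B. \<bar>m j (s i)\<bar>) \<le> e"
    by (rule column_tail) (auto simp: B_def)
  moreover have "{..<L} - {i} = A \<union> B" "A \<inter> B = {}" "finite A" "finite B"
    by (auto simp: A_def B_def)
  ultimately show ?thesis by (simp add: sum.union_disjoint)
qed

lemma gliding_hump_subseq:
  fixes m :: "nat \<Rightarrow> nat \<Rightarrow> real"
  assumes col: "\<And>n J. finite J \<Longrightarrow> (\<Sum>j\<in>J. \<bar>m j n\<bar>) \<le> M" and \<epsilon>: "\<epsilon> > 0"
  obtains s :: "nat \<Rightarrow> nat" where "strict_mono s" "\<And>i L. (\<Sum>l\<in>{..<L} - {i}. \<bar>m (s l) (s i)\<bar>) \<le> \<epsilon>"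
proof -
  define e where "e = \<epsilon> / 3"
  have e: "e > 0" using \<epsilon> by (simp add: e_def)
  obtain \<sigma> r where \<sigma>: "strict_mono \<sigma>" and r: "\<And>j. (\<lambda>k. m j (\<sigma> k)) \<longlonglongrightarrow> r j"
    and "summable (\<lambda>j. \<bar>r j\<bar>)"
    by (rule bounded_columns_row_limits[OF col that])
  then obtain N where N: "\<And>J. finite J \<Longrightarrow> J \<subseteq> {N..} \<Longrightarrow> (\<Sum>j\<in>J. \<bar>r j\<bar>) \<le> e"
    using summable_tail_small e by blast
  have col_summable: "summable (\<lambda>j. \<bar>m j n\<bar>)" for n
    by (intro summableI_nonneg_bounded[where x=M]) (use col in auto)
  have "\<exists>T. \<forall>J. finite J \<longrightarrow> J \<subseteq> {T..} \<longrightarrow> (\<Sum>j\<in>J. \<bar>m j n\<bar>) \<le> e" for n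
  proof -
    obtain T where "\<And>J. finite J \<Longrightarrow> J \<subseteq> {T..} \<Longrightarrow> (\<Sum>j\<in>J. \<bar>m j n\<bar>) \<le> e"
      using summable_tail_small[OF col_summable e] by blast
    then show ?thesis by blast
  qed
  then obtain T where T: "\<And>n J. finite J \<Longrightarrow> J \<subseteq> {T n..} \<Longrightarrow> (\<Sum>j\<in>J. \<bar>m j n\<bar>) \<le> e"
    by metis
  have "\<exists>K. \<forall>k\<ge>K. \<bar>m j (\<sigma> k) - r j\<bar> \<le> e * (1/2) ^ Suc l" for j l
  proof -
    have "e * (1/2) ^ Suc l > 0" using e by simp
    then obtain K where "\<forall>k\<ge>K. dist (m j (\<sigma> k)) (r j) < e * (1/2) ^ Suc l"
      using metric_LIMSEQ_D[OF r] by blast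
    then show ?thesis by (auto simp: dist_real_def intro!: less_imp_le)
  qed
  then obtain K where K: "\<And>j l k. k \<ge> K j l \<Longrightarrow> \<bar>m j (\<sigma> k) - r j\<bar> \<le> e * (1/2) ^ Suc l"
    by metis
  obtain k where k: "strict_mono k" "k 0 = N"
    and k_dom: "\<And>l i. l < i \<Longrightarrow> max (K (\<sigma> (k l)) l) (T (\<sigma> (k l))) \<le> k i"
    using strict_mono_dominating[where N = N and G = "\<lambda>a l. max (K (\<sigma> a) l) (T (\<sigma> a))"] by blast
  define s where "s = \<sigma> \<circ> k"
  have s: "strict_mono s" unfolding s_def using \<sigma> k(1) by (rule strict_mono_o)
  have k_le_s: "k i \<le> s i" for i unfolding s_def using seq_suble[OF \<sigma>] by simp
  have estimate: "(\<Sum>l\<in>{..<L} - {i}. \<bar>m (s l) (s i)\<bar>) \<le> 3 * e" for i L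
  proof (rule gliding_hump_estimate[OF s])
    show "N \<le> s l" for l
      using strict_mono_less_eq[OF k(1), of 0 l] k(2) k_le_s[of l] by simp
    show "\<bar>m (s l) (s i) - r (s l)\<bar> \<le> e * (1/2) ^ Suc l" if "l < i" for l i
      using K k_dom[OF that] unfolding s_def by simp
    show "(\<Sum>j\<in>J. \<bar>m j (s i)\<bar>) \<le> e" if "finite J" "J \<subseteq> s ` {i<..}" for i J
    proof (rule T[OF that(1)])
      have "T (s i) \<le> s l" if "i < l" for l
        using k_dom[OF that] k_le_s[of l] unfolding s_def by simp
      then show "J \<subseteq> {T (s i)..}" using that(2) by auto
    qed
  qed (use N in auto)
  show ?thesis
  proof (rule that)
    show "strict_mono s" by (rule s)
    show "(\<Sum>l\<in>{..<L} - {i}. \<bar>m (s l) (s i)\<bar>) \<le> \<epsilon>" for i L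
      using estimate[of i L] by (simp add: e_def)
  qed
qed

lemma column_sum_le_sign_sum_bound:
  fixes U :: "nat \<Rightarrow> 'a::real_normed_vector \<Rightarrow>\<^sub>L 'b::real_normed_vector"
    and a :: "'b \<Rightarrow>\<^sub>L real" and b :: 'a
  assumes "norm a \<le> 1" "norm b \<le> 1"
    and signs: "\<And>\<epsilon>. (\<And>k. \<bar>\<epsilon> k\<bar> \<le> 1) \<Longrightarrow> norm (\<Sum>k\<in>J. \<epsilon> k *\<^sub>R U k) \<le> M"
  shows "(\<Sum>j\<in>J. \<bar>a (U j b)\<bar>) \<le> M"
proof -
  have "0 \<le> M" using signs[of "\<lambda>_. 0"] by simp
  define W where "W = (\<Sum>j\<in>J. sgn (a (U j b)) *\<^sub>R U j)"
  have abs_eq: "\<bar>t\<bar> = sgn t * t" for t :: real by (cases t "0::real" rule: linorder_cases) auto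
  have "(\<Sum>j\<in>J. \<bar>a (U j b)\<bar>) = a (W b)"
    unfolding abs_eq
    by (simp add: W_def blinfun.sum_left blinfun.sum_right blinfun.scaleR_left blinfun.scaleR_right)
  also have "\<dots> \<le> norm a * (norm W * norm b)"
    using norm_blinfun[of a "W b"] mult_left_mono[OF norm_blinfun[of W b] norm_ge_zero[of a]] by simp
  also have "\<dots> \<le> 1 * (M * 1)"
    using assms(1,2) signs[of "\<lambda>j. sgn (a (U j b))"] \<open>0 \<le> M\<close>
    by (intro mult_mono) (auto simp: W_def abs_sgn_eq)
  finally show ?thesis by simp
qed

lemma sign_sum_bound_reindex:
  fixes U :: "nat \<Rightarrow> 'a::real_normed_vector"
  assumes "inj s"
    and bound: "\<And>J \<epsilon>. finite J \<Longrightarrow> (\<And>k. \<bar>\<epsilon> k\<bar> \<le> 1) \<Longrightarrow> norm (\<Sum>k\<in>J. \<epsilon> k *\<^sub>R U k) \<le> M"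
    and "finite J" "\<And>k. \<bar>\<epsilon> k\<bar> \<le> 1"
  shows "norm (\<Sum>k\<in>J. \<epsilon> k *\<^sub>R U (s k)) \<le> M"
proof -
  have "(\<Sum>k\<in>J. \<epsilon> k *\<^sub>R U (s k)) = (\<Sum>j\<in>s ` J. \<epsilon> (inv s j) *\<^sub>R U j)"
    using sum.reindex[OF inj_on_subset[OF assms(1) subset_UNIV], where A = J and g = "\<lambda>j. \<epsilon> (inv s j) *\<^sub>R U j"]
    by (simp add: inv_f_f[OF assms(1)])
  also have "norm \<dots> \<le> M" using assms(3,4) by (intro bound) auto
  finally show ?thesis .
qed

lemma diagonally_dominant_subsystem:
  fixes U :: "nat \<Rightarrow> 'a::real_normed_vector \<Rightarrow>\<^sub>L 'b::real_normed_vector"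
  assumes \<delta>: "\<delta> > 0" and norm_U: "\<And>n. \<delta> < norm (U n)"
    and signs: "\<And>J \<epsilon>. finite J \<Longrightarrow> (\<And>k. \<bar>\<epsilon> k\<bar> \<le> 1) \<Longrightarrow> norm (\<Sum>k\<in>J. \<epsilon> k *\<^sub>R U k) \<le> M"
  obtains a :: "nat \<Rightarrow> 'b \<Rightarrow>\<^sub>L real" and b :: "nat \<Rightarrow> 'a" and s :: "nat \<Rightarrow> nat"
  where "strict_mono s" "\<And>i. norm (a i) \<le> 1" "\<And>i. norm (b i) \<le> 1" "\<And>i. \<delta> < a i (U (s i) (b i))"
    "\<And>i L. (\<Sum>j\<in>{..<L} - {i}. \<bar>a i (U (s j) (b i))\<bar>) \<le> \<delta> / 4"
proof -
  have "\<exists>a b. norm a \<le> 1 \<and> norm b \<le> 1 \<and> \<delta> < blinfun_apply a (U n b)" for n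
  proof -
    obtain a :: "'b \<Rightarrow>\<^sub>L real" and b where "norm a \<le> 1" "norm b \<le> 1" "\<delta> < a (U n b)"
      using exists_norming_pair[OF less_imp_le[OF \<delta>] norm_U[of n]] by blast
    then show ?thesis by blast
  qed
  then obtain a :: "nat \<Rightarrow> 'b \<Rightarrow>\<^sub>L real" and b :: "nat \<Rightarrow> 'a" where ab: "\<And>n. norm (a n) \<le> 1" "\<And>n. norm (b n) \<le> 1" "\<And>n. \<delta> < a n (U n (b n))"
    by metis
  have col: "(\<Sum>j\<in>J. \<bar>a n (U j (b n))\<bar>) \<le> M" if "finite J" for n J
    using ab signs[OF that] by (intro column_sum_le_sign_sum_bound) auto
  have "\<delta> / 4 > 0" using \<delta> by simp
  obtain s :: "nat \<Rightarrow> nat" where "strict_mono s"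
    and "\<And>i L. (\<Sum>l\<in>{..<L} - {i}. \<bar>a (s i) (U (s l) (b (s i)))\<bar>) \<le> \<delta> / 4"
    using gliding_hump_subseq[where m = "\<lambda>j n. a n (U j (b n))", OF col \<open>\<delta> / 4 > 0\<close>] by blast
  then show ?thesis using ab by (intro that[of s "a \<circ> s" "b \<circ> s"]) simp_all
qed

section \<open>The complemented copy of \<open>\<ell>\<^sub>1\<close>\<close>

lemma apply_bcontfun_sum:
  fixes f :: "'i \<Rightarrow> ('x::topological_space \<Rightarrow>\<^sub>C 'y::real_normed_vector)"
  shows "apply_bcontfun (sum f F) x = (\<Sum>i\<in>F. apply_bcontfun (f i) x)"
  by (induction F rule: infinite_finite_induct) auto

definition unit_seq :: "nat \<Rightarrow> (nat \<Rightarrow>\<^sub>C real)" where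
  "unit_seq n = Bcontfun (\<lambda>k. if k = n then 1 else 0)"

lemma apply_unit_seq: "apply_bcontfun (unit_seq n) k = (if k = n then 1 else 0)"
proof -
  have "(\<lambda>k::nat. if k = n then 1 else 0::real) \<in> bcontfun"
    by (rule bcontfun_normI[where b=1]) auto
  then show ?thesis unfolding unit_seq_def by (simp add: Bcontfun_inverse)
qed

lemma norm_unit_seq: "norm (unit_seq n) = 1"
  using norm_bounded[of "unit_seq n" n] norm_bound[of "unit_seq n" 1]
  by (simp add: apply_unit_seq)

lemma norm_sum_unit_seq_le:
  assumes "\<And>k. \<bar>c k\<bar> \<le> 1"
  shows "norm (\<Sum>k\<in>J. c k *\<^sub>R unit_seq k) \<le> 1"
proof (cases "finite J")
  case True
  show ?thesis
  proof (rule norm_bound)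
    fix x
    have "apply_bcontfun (\<Sum>k\<in>J. c k *\<^sub>R unit_seq k) x = (if x \<in> J then c x else 0)"
      using True by (simp add: apply_bcontfun_sum apply_unit_seq if_distrib[of "(*) _"] cong: if_cong)
    then show "norm (apply_bcontfun (\<Sum>k\<in>J. c k *\<^sub>R unit_seq k) x) \<le> 1" using assms[of x] by simp
  qed
qed simp

lemma iso_embedding_unit_seq_bounds:
  fixes T :: "(nat \<Rightarrow>\<^sub>C real) \<Rightarrow> 'b::real_normed_vector"
  assumes "iso_embedding T"
  obtains c M where "c > 0" "\<And>n. c \<le> norm (T (unit_seq n))"
    "\<And>J \<epsilon>. finite J \<Longrightarrow> (\<And>k. \<bar>\<epsilon> k\<bar> \<le> 1) \<Longrightarrow> norm (\<Sum>k\<in>J. \<epsilon> k *\<^sub>R T (unit_seq k)) \<le> M"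
proof -
  obtain c where c: "c > 0" "\<And>x. c * norm x \<le> norm (T x)" and T: "bounded_linear T"
    using assms unfolding iso_embedding_def by blast
  obtain M where M: "M > 0" "\<And>x. norm (T x) \<le> norm x * M"
    using bounded_linear.pos_bounded[OF T] by blast
  show ?thesis
  proof
    show "c \<le> norm (T (unit_seq n))" for n using c(2)[of "unit_seq n"] by (simp add: norm_unit_seq)
    show "norm (\<Sum>k\<in>J. \<epsilon> k *\<^sub>R T (unit_seq k)) \<le> M" if "\<And>k. \<bar>\<epsilon> k\<bar> \<le> 1" for J \<epsilon>
    proof -
      have "(\<Sum>k\<in>J. \<epsilon> k *\<^sub>R T (unit_seq k)) = T (\<Sum>k\<in>J. \<epsilon> k *\<^sub>R unit_seq k)"
        by (simp add: linear_sum[OF bounded_linear.linear[OF T]] linear_scale[OF bounded_linear.linear[OF T]])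
      also have "norm \<dots> \<le> norm (\<Sum>k\<in>J. \<epsilon> k *\<^sub>R unit_seq k) * M" by (rule M(2))
      also have "\<dots> \<le> 1 * M"
        using norm_sum_unit_seq_le[OF that] M(1) by (intro mult_right_mono) auto
      finally show ?thesis by simp
    qed
  qed (rule c(1))
qed

(* U j stands for the images of the unit vectors of l_infinity, the rank one operators a i (x) b i
   span the copy of l_1, and the functionals T |-> trace (U j o T) recover its coordinates up to the
   diagonally dominant matrix a i (U j (b i)). *)
locale diagonally_dominant_system =
  fixes U :: "nat \<Rightarrow> ('a::banach \<Rightarrow>\<^sub>L 'a)" and a :: "nat \<Rightarrow> ('a \<Rightarrow>\<^sub>L real)" and b :: "nat \<Rightarrow> 'a"
    and \<delta> M :: real
  assumes AP: "approximation_property TYPE('a)"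
    and norm_a: "\<And>i. norm (a i) \<le> 1" and norm_b: "\<And>i. norm (b i) \<le> 1"
    and \<delta>_pos: "\<delta> > 0" and diagonal: "\<And>i. \<delta> < a i (U i (b i))"
    and off_diagonal: "\<And>i L. (\<Sum>j\<in>{..<L} - {i}. \<bar>a i (U j (b i))\<bar>) \<le> \<delta> / 4"
    and sign_sums: "\<And>J \<epsilon>. finite J \<Longrightarrow> (\<And>k. \<bar>\<epsilon> k\<bar> \<le> 1) \<Longrightarrow> norm (\<Sum>k\<in>J. \<epsilon> k *\<^sub>R U k) \<le> M"
begin

definition E :: "nat \<Rightarrow> nat \<Rightarrow> real" where
  "E j i = (if j = i then 0 else a i (U j (b i)) / a j (U j (b j)))"

lemma small_column_matrix_E: "small_column_matrix E (1/4)"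
proof
  fix i and J :: "nat set" assume "finite J"
  then obtain L where L: "J \<subseteq> {..<L}" using finite_nat_bounded by blast
  have "(\<Sum>j\<in>J. \<bar>E j i\<bar>) = (\<Sum>j\<in>J - {i}. \<bar>E j i\<bar>)"
    using \<open>finite J\<close> by (intro sum.mono_neutral_right) (auto simp: E_def)
  also have "\<dots> \<le> (\<Sum>j\<in>J - {i}. \<bar>a i (U j (b i))\<bar> / \<delta>)"
  proof (rule sum_mono)
    fix j assume "j \<in> J - {i}"
    have "\<delta> \<le> \<bar>a j (U j (b j))\<bar>" using diagonal[of j] by simp
    then show "\<bar>E j i\<bar> \<le> \<bar>a i (U j (b i))\<bar> / \<delta>"
      using \<open>j \<in> J - {i}\<close> \<delta>_pos by (auto simp: E_def abs_div intro!: divide_left_mono)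
  qed
  also have "\<dots> \<le> (\<Sum>j\<in>{..<L} - {i}. \<bar>a i (U j (b i))\<bar> / \<delta>)"
    using L \<delta>_pos by (intro sum_mono2) auto
  also have "\<dots> = (\<Sum>j\<in>{..<L} - {i}. \<bar>a i (U j (b i))\<bar>) / \<delta>" by (simp add: sum_divide_distrib)
  also have "\<dots> \<le> (\<delta> / 4) / \<delta>"
    using off_diagonal[of i L] \<delta>_pos by (intro divide_right_mono) auto
  finally show "(\<Sum>j\<in>J. \<bar>E j i\<bar>) \<le> 1/4" using \<delta>_pos by simp
qed simp

interpretation E: small_column_matrix E "1/4" by (rule small_column_matrix_E)

definition embed :: "(nat \<Rightarrow> real) \<Rightarrow> ('a \<Rightarrow>\<^sub>L 'a)" where
  "embed f = nuclear_op (\<lambda>i. f i *\<^sub>R a i) b"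

lemma embed_rep:
  assumes f: "f \<in> ell1"
  shows "nuclear_rep (embed f) (\<lambda>i. f i *\<^sub>R a i) b"
    and "(\<Sum>i. norm (f i *\<^sub>R a i) * norm (b i)) \<le> ell1_norm f"
proof -
  have le: "norm (f i *\<^sub>R a i) * norm (b i) \<le> \<bar>f i\<bar>" for i
  proof -
    have "\<bar>f i\<bar> * (norm (a i) * norm (b i)) \<le> \<bar>f i\<bar>"
      using mult_mono[OF norm_a[of i] norm_b[of i]] by (intro mult_left_le) auto
    then show ?thesis by (simp add: mult.assoc)
  qed
  have s: "summable (\<lambda>i. norm (f i *\<^sub>R a i) * norm (b i))"
    by (rule summable_comparison_test'[OF ell1_summable[OF f]]) (use le in simp)
  then show "nuclear_rep (embed f) (\<lambda>i. f i *\<^sub>R a i) b"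
    unfolding embed_def by (rule nuclear_rep_nuclear_op)
  show "(\<Sum>i. norm (f i *\<^sub>R a i) * norm (b i)) \<le> ell1_norm f"
    unfolding ell1_norm_def by (rule suminf_le[OF le s ell1_summable[OF f]])
qed

lemma embed_nuclear: "f \<in> ell1 \<Longrightarrow> embed f \<in> nuclear_ops"
  unfolding nuclear_ops_def using embed_rep(1) by blast

lemma nuclear_norm_embed_le: "f \<in> ell1 \<Longrightarrow> nuclear_norm (embed f) \<le> ell1_norm f"
  using nuclear_norm_le_rep[OF embed_rep(1)] embed_rep(2) by (rule order_trans)

lemma embed_lincomb:
  assumes f: "f \<in> ell1" and g: "g \<in> ell1"
  shows "embed (\<lambda>n. c * f n + d * g n) = c *\<^sub>R embed f + d *\<^sub>R embed g"
proof (rule blinfun_eqI)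
  fix x
  have "(\<lambda>i. (c * f i + d * g i) *\<^sub>R a i x *\<^sub>R b i) sums (c *\<^sub>R embed f x + d *\<^sub>R embed g x)"
    using sums_add[OF sums_scaleR_right[OF nuclear_rep_sums[OF embed_rep(1)[OF f], of x], of c]
        sums_scaleR_right[OF nuclear_rep_sums[OF embed_rep(1)[OF g], of x], of d]]
    by (simp add: blinfun.scaleR_left algebra_simps)
  moreover have "(\<lambda>i. (c * f i + d * g i) *\<^sub>R a i x *\<^sub>R b i) sums embed (\<lambda>n. c * f n + d * g n) x"
    using nuclear_rep_sums[OF embed_rep(1)[OF ell1_lincomb[OF f g]]] by (simp add: blinfun.scaleR_left)
  ultimately show "embed (\<lambda>n. c * f n + d * g n) x = (c *\<^sub>R embed f + d *\<^sub>R embed g) x"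
    by (simp add: sums_unique2[of _ "embed (\<lambda>n. c * f n + d * g n) x"] blinfun.add_left blinfun.scaleR_left)
qed

definition coeff :: "('a \<Rightarrow>\<^sub>L 'a) \<Rightarrow> nat \<Rightarrow> real" where
  "coeff T j = nuclear_trace (U j o\<^sub>L T) / a j (U j (b j))"

lemma coeff_embed:
  assumes f: "f \<in> ell1"
  shows "coeff (embed f) j = f j + matrix_apply E f j"
proof -
  have "(\<lambda>i. f i * a i (U j (b i))) sums nuclear_trace (U j o\<^sub>L embed f)"
    using nuclear_rep_trace_sums[OF AP nuclear_rep_compose[OF embed_rep(1)[OF f]]]
    by (simp add: blinfun.scaleR_left)
  then have "(\<lambda>i. f i * a i (U j (b i)) / a j (U j (b j))) sums coeff (embed f) j"
    unfolding coeff_def by (rule sums_divide)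
  also have "(\<lambda>i. f i * a i (U j (b i)) / a j (U j (b j))) = (\<lambda>i. E j i * f i + (if i = j then f j else 0))"
    using diagonal[of j] \<delta>_pos by (auto simp: E_def)
  finally have "(\<lambda>i. E j i * f i + (if i = j then f j else 0)) sums coeff (embed f) j" .
  moreover have "(\<lambda>i. E j i * f i + (if i = j then f j else 0)) sums (matrix_apply E f j + f j)"
    unfolding matrix_apply_def
    by (intro sums_add summable_sums E.row_summable(2)[OF f]) (rule sums_single)
  ultimately show ?thesis using sums_unique2 by (metis add.commute)
qed

lemma sum_abs_trace_le:
  assumes T: "T \<in> nuclear_ops"
  shows "(\<Sum>j\<in>J. \<bar>nuclear_trace (U j o\<^sub>L T)\<bar>) \<le> M * nuclear_norm T"
proof (cases "finite J")
  case True
  define W where "W = (\<Sum>j\<in>J. sgn (nuclear_trace (U j o\<^sub>L T)) *\<^sub>R U j)"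
  have abs_eq: "\<bar>t\<bar> = sgn t * t" for t :: real by (cases t "0::real" rule: linorder_cases) auto
  have "(\<Sum>j\<in>J. \<bar>nuclear_trace (U j o\<^sub>L T)\<bar>) = nuclear_trace (W o\<^sub>L T)"
    unfolding abs_eq W_def by (rule nuclear_trace_compose_sum[OF AP T, symmetric])
  also have "\<dots> \<le> nuclear_norm (W o\<^sub>L T)"
    using abs_nuclear_trace_le[OF AP nuclear_ops_compose[OF T]] by (rule order_trans[OF abs_ge_self])
  also have "\<dots> \<le> norm W * nuclear_norm T" by (rule nuclear_norm_compose_le[OF T])
  also have "\<dots> \<le> M * nuclear_norm T"
    unfolding W_def using sign_sums[OF True] nuclear_norm_nonneg[OF T]
    by (intro mult_right_mono) (auto simp: abs_sgn_eq)
  finally show ?thesis .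
next
  case False
  then show ?thesis
    using sign_sums[of "{}" "\<lambda>_. 0"] nuclear_norm_nonneg[OF T] by simp
qed

lemma coeff_ell1:
  assumes T: "T \<in> nuclear_ops"
  shows "coeff T \<in> ell1" and "ell1_norm (coeff T) \<le> M / \<delta> * nuclear_norm T"
proof -
  have "(\<Sum>j<n. \<bar>coeff T j\<bar>) \<le> M / \<delta> * nuclear_norm T" for n
  proof -
    have "\<bar>coeff T j\<bar> \<le> \<bar>nuclear_trace (U j o\<^sub>L T)\<bar> / \<delta>" for j
      using diagonal[of j] \<delta>_pos by (auto simp: coeff_def abs_div intro!: divide_left_mono)
    then have "(\<Sum>j<n. \<bar>coeff T j\<bar>) \<le> (\<Sum>j<n. \<bar>nuclear_trace (U j o\<^sub>L T)\<bar>) / \<delta>"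
      by (simp add: sum_divide_distrib sum_mono)
    also have "\<dots> \<le> M * nuclear_norm T / \<delta>"
      using sum_abs_trace_le[OF T] \<delta>_pos by (intro divide_right_mono) auto
    finally show ?thesis by simp
  qed
  then show "coeff T \<in> ell1" "ell1_norm (coeff T) \<le> M / \<delta> * nuclear_norm T"
    by (rule ell1_bounded_partial_sums)+
qed

lemma coeff_lincomb:
  assumes "S \<in> nuclear_ops" "T \<in> nuclear_ops"
  shows "coeff (c *\<^sub>R S + d *\<^sub>R T) j = c * coeff S j + d * coeff T j"
proof -
  have "U j o\<^sub>L (c *\<^sub>R S + d *\<^sub>R T) = c *\<^sub>R (U j o\<^sub>L S) + d *\<^sub>R (U j o\<^sub>L T)"
    by (rule blinfun_eqI) (simp add: blinfun.add_left blinfun.scaleR_left blinfun.add_right blinfun.scaleR_right)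
  then show ?thesis
    using nuclear_trace_lincomb[OF AP nuclear_ops_compose[OF assms(1)] nuclear_ops_compose[OF assms(2)]]
    by (simp add: coeff_def add_divide_distrib)
qed

definition proj :: "('a \<Rightarrow>\<^sub>L 'a) \<Rightarrow> ('a \<Rightarrow>\<^sub>L 'a)" where
  "proj T = embed (neumann_sum E (coeff T))"

lemma neumann_sum_coeff_embed:
  assumes "f \<in> ell1"
  shows "neumann_sum E (coeff (embed f)) = f"
proof -
  have "coeff (embed f) = (\<lambda>j. f j + matrix_apply E f j)" using coeff_embed[OF assms] by auto
  then show ?thesis using E.neumann_sum_plus_matrix_apply[OF assms] by simp
qed

lemma neumann_sum_coeff:
  assumes "T \<in> nuclear_ops"
  shows "neumann_sum E (coeff T) \<in> ell1"
    and "ell1_norm (neumann_sum E (coeff T)) \<le> 4 * M / (3 * \<delta>) * nuclear_norm T"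
proof -
  show "neumann_sum E (coeff T) \<in> ell1" by (rule E.neumann_sum_ell1(1)[OF coeff_ell1(1)[OF assms]])
  have "ell1_norm (neumann_sum E (coeff T)) \<le> ell1_norm (coeff T) / (1 - 1/4)"
    by (rule E.neumann_sum_ell1(2)[OF coeff_ell1(1)[OF assms]])
  also have "\<dots> \<le> (M / \<delta> * nuclear_norm T) / (1 - 1/4)"
    using coeff_ell1(2)[OF assms] by (intro divide_right_mono) auto
  finally show "ell1_norm (neumann_sum E (coeff T)) \<le> 4 * M / (3 * \<delta>) * nuclear_norm T"
    by simp
qed

lemma M_pos: "M > 0"
proof -
  have "\<delta> < a 0 (U 0 (b 0))" by (rule diagonal)
  also have "\<dots> \<le> norm (a 0) * norm (U 0 (b 0))"
    using norm_blinfun[of "a 0" "U 0 (b 0)"] by simp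
  also have "\<dots> \<le> norm (a 0) * (norm (U 0) * norm (b 0))" by (intro mult_left_mono norm_blinfun) simp
  also have "\<dots> \<le> 1 * (norm (U 0) * 1)"
    using norm_a norm_b by (intro mult_mono) auto
  also have "\<dots> \<le> M" using sign_sums[of "{0}" "\<lambda>_. 1"] by simp
  finally show ?thesis using \<delta>_pos by simp
qed

lemma proj_lincomb:
  assumes S: "S \<in> nuclear_ops" and T: "T \<in> nuclear_ops"
  shows "proj (c *\<^sub>R S + d *\<^sub>R T) = c *\<^sub>R proj S + d *\<^sub>R proj T"
proof -
  have "coeff (c *\<^sub>R S + d *\<^sub>R T) = (\<lambda>j. c * coeff S j + d * coeff T j)"
    using coeff_lincomb[OF S T] by auto
  then have "neumann_sum E (coeff (c *\<^sub>R S + d *\<^sub>R T))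
      = (\<lambda>n. c * neumann_sum E (coeff S) n + d * neumann_sum E (coeff T) n)"
    using E.neumann_sum_lincomb[OF coeff_ell1(1)[OF S] coeff_ell1(1)[OF T]] by simp
  then show ?thesis
    unfolding proj_def using embed_lincomb[OF neumann_sum_coeff(1)[OF S] neumann_sum_coeff(1)[OF T]]
    by simp
qed

lemma proj_embed: "f \<in> ell1 \<Longrightarrow> proj (embed f) = embed f"
  by (simp add: proj_def neumann_sum_coeff_embed)

lemma range_proj: "proj ` nuclear_ops = embed ` ell1"
proof
  show "proj ` nuclear_ops \<subseteq> embed ` ell1" using neumann_sum_coeff(1) by (auto simp: proj_def)
  show "embed ` ell1 \<subseteq> proj ` nuclear_ops"
  proof
    fix X assume "X \<in> embed ` ell1"
    then obtain f where f: "f \<in> ell1" "X = embed f" by blast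
    then have "X = proj (embed f)" by (simp add: proj_embed)
    then show "X \<in> proj ` nuclear_ops" using embed_nuclear[OF f(1)] by blast
  qed
qed

theorem ell1_complemented: "ell1_complemented_in_nuclear TYPE('a)"
  unfolding ell1_complemented_in_nuclear_def
proof (intro exI conjI ballI allI)
  show "embed ` ell1 \<subseteq> nuclear_ops" using embed_nuclear by blast
  show "embed (\<lambda>n. c * f n + d * g n) = c *\<^sub>R embed f + d *\<^sub>R embed g"
    if "f \<in> ell1" "g \<in> ell1" for f g c d using that by (rule embed_lincomb)
  show "0 < 3 * \<delta> / (4 * M)" using \<delta>_pos M_pos by simp
  show "nuclear_norm (embed f) \<le> 1 * ell1_norm f" if "f \<in> ell1" for f
    using nuclear_norm_embed_le[OF that] by simp
  show "3 * \<delta> / (4 * M) * ell1_norm f \<le> nuclear_norm (embed f)" if "f \<in> ell1" for f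
    using neumann_sum_coeff(2)[OF embed_nuclear[OF that]] \<delta>_pos M_pos
    by (simp add: neumann_sum_coeff_embed[OF that] field_simps)
  show "linear_on_set nuclear_ops proj"
    unfolding linear_on_set_def by (simp add: proj_lincomb)
  show "proj (proj T) = proj T" if "T \<in> nuclear_ops" for T
    unfolding proj_def[of T] by (rule proj_embed[OF neumann_sum_coeff(1)[OF that]])
  show "nuclear_norm (proj T) \<le> 4 * M / (3 * \<delta>) * nuclear_norm T" if "T \<in> nuclear_ops" for T
    unfolding proj_def
    using nuclear_norm_embed_le[OF neumann_sum_coeff(1)[OF that]] neumann_sum_coeff(2)[OF that]
    by (rule order_trans)
  show "proj ` nuclear_ops = embed ` ell1" by (rule range_proj)
qed

end

theorem mainTheorem9:
  assumes "approximation_property TYPE('a::banach)"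
    and "\<exists>T :: (nat \<Rightarrow>\<^sub>C real) \<Rightarrow> ('a \<Rightarrow>\<^sub>L 'a). iso_embedding T"
  shows "ell1_complemented_in_nuclear TYPE('a)"
proof -
  obtain T :: "(nat \<Rightarrow>\<^sub>C real) \<Rightarrow> ('a \<Rightarrow>\<^sub>L 'a)" where "iso_embedding T" using assms(2) by blast
  obtain c M where "c > 0" and c: "\<And>n. c \<le> norm (T (unit_seq n))"
    and M: "\<And>J \<epsilon>. finite J \<Longrightarrow> (\<And>k. \<bar>\<epsilon> k\<bar> \<le> 1) \<Longrightarrow> norm (\<Sum>k\<in>J. \<epsilon> k *\<^sub>R T (unit_seq k)) \<le> M"
    using iso_embedding_unit_seq_bounds[OF \<open>iso_embedding T\<close>] by blast
  have "c / 2 > 0" using \<open>c > 0\<close> by simp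
  have half: "c / 2 < norm (T (unit_seq n))" for n using c[of n] \<open>c > 0\<close> by linarith
  obtain a :: "nat \<Rightarrow> 'a \<Rightarrow>\<^sub>L real" and b s where s: "strict_mono s" and ab: "\<And>i. norm (a i) \<le> 1" "\<And>i. norm (b i) \<le> 1"
    "\<And>i. c / 2 < a i (T (unit_seq (s i)) (b i))"
    "\<And>i L. (\<Sum>j\<in>{..<L} - {i}. \<bar>a i (T (unit_seq (s j)) (b i))\<bar>) \<le> c / 2 / 4"
    by (rule diagonally_dominant_subsystem[where U = "\<lambda>n. T (unit_seq n)", OF \<open>c / 2 > 0\<close> half M that])
  interpret diagonally_dominant_system "\<lambda>i. T (unit_seq (s i))" a b "c / 2" M
  proof
    show "norm (\<Sum>k\<in>J. \<epsilon> k *\<^sub>R T (unit_seq (s k))) \<le> M"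
      if "finite J" "\<And>k. \<bar>\<epsilon> k\<bar> \<le> 1" for J \<epsilon>
      using sign_sum_bound_reindex[OF strict_mono_imp_inj_on[OF s] M that] .
  qed (fact assms(1) ab \<open>c / 2 > 0\<close>)+
  show ?thesis by (rule ell1_complemented)
qed

end
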